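(* Let $p$ be a prime, $1\le s\le n$ integers with $s\ne1$ if $p=2$. Let $K$ be a field of characteristic zero containing a primitive $p^s$-th root of unity $\xi$ and no primitive $p^{s+1}$-th root of unity. Let $c\in K^\times$ be such that $L=K(u)$, where $u^{p^n}=c^{p^{n-s}}\xi$, is a field extension of $K$ of degree $p^n$; then $L/K$ is cyclic Galois and has a generator $\sigma$ of $\mathrm{Gal}(L/K)$ with $\sigma(u)=c^{-1}u^{p^s+1}$. Let $k=K((t))$ and let $D=(L((t))/k,\sigma,t)$ be the cyclic algebra, i.e. $D=\bigoplus_{i=0}^{p^n-1}L((t))\,v^i$ with $vb=\sigma(b)v$ for $b\in L((t))$ and $v^{p^n}=t$. Then $D$ is a central division $k$-algebra and $D\cong k^\alpha G$ for some $\alpha\in H^2(G,k^\times)$, where $G=\langle\pi,\sigma\mid \pi^{p^n}=\sigma^{p^n}=1,\ \sigma\pi\sigma^{-1}=\pi^{p^s+1}\rangle$ (the elements $u$ and $v$ representing $\pi$ and $\sigma$).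
   Context: $k^\alpha G$ denotes the twisted group algebra ($k$-basis $\{u_g\}_{g\in G}$, $u_gu_h=f(g,h)u_{gh}$ for a 2-cocycle $f$ representing $\alpha$, trivial action). $L((t))$ is the Laurent series field over $L$, with $\sigma$ extended coefficientwise. *)

theory Defs
  imports "HOL-Computational_Algebra.Formal_Laurent_Series"
begin

definition primitive_root_of_unity :: "nat \<Rightarrow> 'a::field \<Rightarrow> bool" where
  "primitive_root_of_unity m z \<longleftrightarrow> 0 < m \<and> z ^ m = 1 \<and> (\<forall>j. 0 < j \<and> j < m \<longrightarrow> z ^ j \<noteq> 1)"

section \<open>Field extensions  iota : K -> L  (L a field type, K embedded via iota)\<close>

definition field_hom :: "('a::field \<Rightarrow> 'b::field) \<Rightarrow> bool" where
  "field_hom f \<longleftrightarrow> f 1 = 1 \<and> (\<forall>x y. f (x + y) = f x + f y) \<and> (\<forall>x y. f (x * y) = f x * f y)"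

definition is_subfield :: "'b::field set \<Rightarrow> bool" where
  "is_subfield F \<longleftrightarrow> 0 \<in> F \<and> 1 \<in> F \<and> (\<forall>x\<in>F. \<forall>y\<in>F. x + y \<in> F \<and> x * y \<in> F)
     \<and> (\<forall>x\<in>F. - x \<in> F) \<and> (\<forall>x\<in>F. x \<noteq> 0 \<longrightarrow> inverse x \<in> F)"

definition generated_field :: "'b::field set \<Rightarrow> 'b set" where
  "generated_field S = \<Inter>{F. is_subfield F \<and> S \<subseteq> F}"

definition ext_degree_is :: "('a::field \<Rightarrow> 'b::field) \<Rightarrow> nat \<Rightarrow> bool" where
  "ext_degree_is iota d \<longleftrightarrow> (\<exists>B::'b set. finite B \<and> card B = d
      \<and> (\<forall>a::'b \<Rightarrow> 'a. (\<Sum>b\<in>B. iota (a b) * b) = 0 \<longrightarrow> (\<forall>b\<in>B. a b = 0))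
      \<and> (\<forall>y. \<exists>a::'b \<Rightarrow> 'a. y = (\<Sum>b\<in>B. iota (a b) * b)))"

definition galois_aut :: "('a::field \<Rightarrow> 'b::field) \<Rightarrow> ('b \<Rightarrow> 'b) \<Rightarrow> bool" where
  "galois_aut iota \<sigma> \<longleftrightarrow> bij \<sigma> \<and> field_hom \<sigma> \<and> (\<forall>a. \<sigma> (iota a) = iota a)"

definition galois_group :: "('a::field \<Rightarrow> 'b::field) \<Rightarrow> ('b \<Rightarrow> 'b) set" where
  "galois_group iota = {\<sigma>. galois_aut iota \<sigma>}"

definition fls_cmap :: "('a::zero \<Rightarrow> 'b::zero) \<Rightarrow> 'a fls \<Rightarrow> 'b fls" where
  "fls_cmap f F = Abs_fls (\<lambda>n. f (fls_nth F n))"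

text \<open>An element sum_{i<N} x_i v^i is represented by the function x with x i = 0 for i >= N.\<close>
definition cyc_carrier :: "nat \<Rightarrow> (nat \<Rightarrow> 'b::field fls) set" where
  "cyc_carrier N = {x. \<forall>i\<ge>N. x i = 0}"

definition cyc_one :: "nat \<Rightarrow> 'b::field fls" where
  "cyc_one i = (if i = 0 then 1 else 0)"

text \<open>(a v^i)(b v^j) = a sigma^i(b) v^(i+j), and v^N = t.\<close>
definition cyc_mult :: "nat \<Rightarrow> ('b::field \<Rightarrow> 'b) \<Rightarrow> (nat \<Rightarrow> 'b fls) \<Rightarrow> (nat \<Rightarrow> 'b fls) \<Rightarrow> (nat \<Rightarrow> 'b fls)" where
  "cyc_mult N \<sigma> x y = (\<lambda>k. if k < N then
      (\<Sum>i<N. \<Sum>j<N. if (i + j) mod N = k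
          then (if N \<le> i + j then fls_X else 1) * x i * fls_cmap (\<sigma> ^^ i) (y j) else 0)
      else 0)"

definition cyc_scalar :: "('a::field \<Rightarrow> 'b::field) \<Rightarrow> 'a fls \<Rightarrow> (nat \<Rightarrow> 'b fls)" where
  "cyc_scalar iota a = (\<lambda>i. if i = 0 then fls_cmap iota a else 0)"

definition cyc_smult :: "('a::field \<Rightarrow> 'b::field) \<Rightarrow> 'a fls \<Rightarrow> (nat \<Rightarrow> 'b fls) \<Rightarrow> (nat \<Rightarrow> 'b fls)" where
  "cyc_smult iota a x = (\<lambda>i. fls_cmap iota a * x i)"

definition cyc_elem_L :: "'b::field \<Rightarrow> (nat \<Rightarrow> 'b fls)" where
  "cyc_elem_L u = (\<lambda>i. if i = 0 then fls_const u else 0)"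

definition cyc_v :: "nat \<Rightarrow> 'b::field fls" where
  "cyc_v i = (if i = 1 then 1 else 0)"

definition cyc_is_division :: "nat \<Rightarrow> ('b::field \<Rightarrow> 'b) \<Rightarrow> bool" where
  "cyc_is_division N \<sigma> \<longleftrightarrow> (\<forall>x\<in>cyc_carrier N. x \<noteq> (\<lambda>_. 0) \<longrightarrow>
      (\<exists>y\<in>cyc_carrier N. cyc_mult N \<sigma> x y = cyc_one \<and> cyc_mult N \<sigma> y x = cyc_one))"

definition cyc_is_central :: "('a::field \<Rightarrow> 'b::field) \<Rightarrow> nat \<Rightarrow> ('b \<Rightarrow> 'b) \<Rightarrow> bool" where
  "cyc_is_central iota N \<sigma> \<longleftrightarrow>
     {z\<in>cyc_carrier N. \<forall>x\<in>cyc_carrier N. cyc_mult N \<sigma> z x = cyc_mult N \<sigma> x z} = range (cyc_scalar iota)"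

section \<open>The group G = < pi, sigma | pi^N = sigma^N = 1, sigma pi sigma^-1 = pi^m >,  N = p^n, m = p^s+1\<close>

text \<open>Every element is uniquely pi^a sigma^b with a, b < N; encoded as the pair (a,b).
  Then pi^a sigma^b pi^c sigma^d = pi^(a + c m^b) sigma^(b+d).\<close>
definition G_carrier :: "nat \<Rightarrow> (nat \<times> nat) set" where
  "G_carrier N = {0..<N} \<times> {0..<N}"

definition G_mult :: "nat \<Rightarrow> nat \<Rightarrow> nat \<times> nat \<Rightarrow> nat \<times> nat \<Rightarrow> nat \<times> nat" where
  "G_mult N m g h = ((fst g + fst h * m ^ snd g) mod N, (snd g + snd h) mod N)"

definition G_pi :: "nat \<times> nat" where "G_pi = (1, 0)"
definition G_sigma :: "nat \<times> nat" where "G_sigma = (0, 1)"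

definition two_cocycle :: "nat \<Rightarrow> nat \<Rightarrow> (nat \<times> nat \<Rightarrow> nat \<times> nat \<Rightarrow> 'k::field) \<Rightarrow> bool" where
  "two_cocycle N m f \<longleftrightarrow>
     (\<forall>g\<in>G_carrier N. \<forall>h\<in>G_carrier N. f g h \<noteq> 0) \<and>
     (\<forall>g\<in>G_carrier N. \<forall>h\<in>G_carrier N. \<forall>l\<in>G_carrier N.
        f g h * f (G_mult N m g h) l = f h l * f g (G_mult N m h l))"

definition tga_carrier :: "nat \<Rightarrow> (nat \<times> nat \<Rightarrow> 'k::field) set" where
  "tga_carrier N = {x. \<forall>g. g \<notin> G_carrier N \<longrightarrow> x g = 0}"

definition tga_mult :: "nat \<Rightarrow> nat \<Rightarrow> (nat \<times> nat \<Rightarrow> nat \<times> nat \<Rightarrow> 'k::field)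
    \<Rightarrow> (nat \<times> nat \<Rightarrow> 'k) \<Rightarrow> (nat \<times> nat \<Rightarrow> 'k) \<Rightarrow> (nat \<times> nat \<Rightarrow> 'k)" where
  "tga_mult N m f x y = (\<lambda>g. if g \<in> G_carrier N then
      (\<Sum>h\<in>G_carrier N. \<Sum>l\<in>G_carrier N. if G_mult N m h l = g then x h * y l * f h l else 0)
      else 0)"

definition tga_basis :: "nat \<times> nat \<Rightarrow> (nat \<times> nat \<Rightarrow> 'k::field)" where
  "tga_basis g = (\<lambda>h. if h = g then 1 else 0)"

end

theory Submission
  imports Defs "HOL-Computational_Algebra.Primes" "HOL-Computational_Algebra.Polynomial"
    "HOL-Library.Function_Algebras"
begin

(*
  Notation: N = p^n, m = p^s + 1, rad = c^(p^(n-s)) xi (so u^N = rad) and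
  S(d) = 1 + m + ... + m^(d-1).

  Lifting the exponent gives v_p(m^(p^k) - 1) = s + k,
    hence v_p(S(p^k)) = k, and therefore p^n divides S(d) for no 0 < d < p^n.  This is where
    the hypothesis "s > 1 if p = 2" enters.
  * Cyclic algebras (locale cyclic_algebra).  For any automorphism sigma of L with sigma^N = id,
    the multiplication of D = (L((t)), sigma, t) is bilinear, associative and unital, and D has
    no zero divisors: the product of the lowest terms of x and y (for the v-adic valuation,
    v^N = t) cannot cancel in xy.
  * The Kummer extension (locale kummer_extension).  As [L:K] = N, the powers 1, u, ..., u^(N-1)
    form a K-basis of L.  zeta = u^(p^s)/c has order exactly N and zeta u is again a root of
    X^N - rad, so u |-> zeta u extends to a K-automorphism sigma with sigma^r(u) = zeta^S(r) u.
    These N conjugates are distinct by the arithmetic, so Gal(L/K) = <sigma> has order N and the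
    fixed field of sigma is K.  In D the elements u^a v^b (a, b < N) form a k-basis that
    multiplies through an explicit nonzero function f; associativity of D makes f a 2-cocycle
    and u_(a,b) |-> u^a v^b an isomorphism k^f G -> D.  D is central since whatever commutes with
    u and v lies in k, and a division algebra since left multiplication by x /= 0 is an injective
    k-linear endomorphism of the finite-dimensional k-space D.
*)

context
  fixes f :: "'a::field \<Rightarrow> 'b::field"
  assumes fh: "field_hom f"
begin

lemma fh_1: "f 1 = 1" and fh_add: "f (x + y) = f x + f y" and fh_mult: "f (x * y) = f x * f y"
  using fh unfolding field_hom_def by auto

lemma fh_0: "f 0 = 0"
  using fh_add[of 0 0] by (metis add_cancel_right_right add.right_neutral)

lemma fh_uminus: "f (- x) = - f x"
  using fh_add[of x "-x"] fh_0 by (simp add: eq_neg_iff_add_eq_0 add.commute)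

lemma fh_diff: "f (x - y) = f x - f y"
  using fh_add[of x "-y"] fh_uminus[of y] by simp

lemma fh_power: "f (x ^ n) = f x ^ n"
  by (induction n) (auto simp: fh_1 fh_mult)

lemma fh_sum: "f (sum g A) = sum (\<lambda>i. f (g i)) A"
  by (induction A rule: infinite_finite_induct) (auto simp: fh_0 fh_add)

text \<open>Field homomorphisms are injective: a unit cannot be sent to zero.\<close>
lemma fh_eq0: "f x = 0 \<longleftrightarrow> x = 0"
proof
  assume fx: "f x = 0"
  show "x = 0"
  proof (rule ccontr)
    assume "x \<noteq> 0"
    then have "f x * f (inverse x) = 1" using fh_mult[of x "inverse x"] fh_1 by simp
    with fx show False by simp
  qed
qed (simp add: fh_0)

lemma fh_inj: "inj f"
  by (rule injI) (metis fh_diff fh_eq0 right_minus_eq)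

lemma fh_inverse: "f (inverse x) = inverse (f x)"
proof (cases "x = 0")
  case False
  then have "f x * f (inverse x) = 1" using fh_mult[of x "inverse x"] fh_1 by simp
  then show ?thesis by (metis inverse_unique)
qed (simp add: fh_0)

end

lemma field_hom_id: "field_hom id"
  by (auto simp: field_hom_def)

lemma field_hom_comp: "field_hom f \<Longrightarrow> field_hom g \<Longrightarrow> field_hom (f \<circ> g)"
  by (auto simp: field_hom_def)

lemma field_hom_funpow: "field_hom (f::'a::field \<Rightarrow> 'a) \<Longrightarrow> field_hom (f ^^ n)"
  by (induction n) (auto simp: field_hom_id intro: field_hom_comp)

notation fls_nth (infixl \<open>$$\<close> 75)

lemma fls_cmap_nth [simp]:
  assumes "f 0 = 0"
  shows "fls_cmap f F $$ n = f (F $$ n)"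
proof -
  have "\<forall>n < fls_subdegree F. f (F $$ n) = 0" using assms by simp
  then show ?thesis unfolding fls_cmap_def by (rule nth_Abs_fls_lower_bound)
qed

context
  fixes f :: "'a::field \<Rightarrow> 'b::field"
  assumes fh: "field_hom f"
begin

lemma cmap_nth: "fls_cmap f F $$ n = f (F $$ n)"
  by (simp add: fh_0[OF fh])

lemma cmap_0 [simp]: "fls_cmap f 0 = 0"
  by (rule fls_eqI) (simp add: cmap_nth fh_0[OF fh])

lemma cmap_eq0: "fls_cmap f F = 0 \<longleftrightarrow> F = 0"
  by (auto simp: fls_eq_iff cmap_nth fh_eq0[OF fh])

lemma cmap_subdegree: "fls_subdegree (fls_cmap f F) = fls_subdegree F"
proof (cases "F = 0")
  case False
  show ?thesis
    by (rule fls_subdegree_eqI) (auto simp: cmap_nth fh_eq0[OF fh] False)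
qed simp

lemma cmap_add: "fls_cmap f (F + G) = fls_cmap f F + fls_cmap f G"
  by (rule fls_eqI) (simp add: cmap_nth fh_add[OF fh])

lemma cmap_diff: "fls_cmap f (F - G) = fls_cmap f F - fls_cmap f G"
  by (rule fls_eqI) (simp add: cmap_nth fh_diff[OF fh])

lemma cmap_mult: "fls_cmap f (F * G) = fls_cmap f F * fls_cmap f G"
  by (rule fls_eqI)
    (simp add: cmap_nth fls_times_nth(2) cmap_subdegree fh_sum[OF fh] fh_mult[OF fh])

lemma cmap_1 [simp]: "fls_cmap f 1 = 1"
  by (rule fls_eqI) (simp add: cmap_nth fh_1[OF fh] fh_0[OF fh])

lemma cmap_const [simp]: "fls_cmap f (fls_const c) = fls_const (f c)"
  by (rule fls_eqI) (simp add: cmap_nth fh_0[OF fh])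

lemma cmap_X [simp]: "fls_cmap f fls_X = fls_X"
  by (rule fls_eqI) (simp add: cmap_nth fh_1[OF fh] fh_0[OF fh])

lemma cmap_power: "fls_cmap f (F ^ k) = fls_cmap f F ^ k"
  by (induction k) (auto simp: cmap_mult)

lemma cmap_sum: "fls_cmap f (sum g A) = sum (\<lambda>i. fls_cmap f (g i)) A"
  by (induction A rule: infinite_finite_induct) (auto simp: cmap_add)

lemma cmap_inj: "inj (fls_cmap f)"
  by (rule injI) (metis cmap_diff cmap_eq0 right_minus_eq)

end

lemma cmap_comp:
  assumes "g 0 = 0" "f 0 = 0"
  shows "fls_cmap (f \<circ> g) F = fls_cmap f (fls_cmap g F)"
  by (rule fls_eqI) (simp add: assms)

lemma cmap_id [simp]: "fls_cmap id F = F"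
  by (auto intro: fls_eqI)

context
  fixes f :: "'a::field \<Rightarrow> 'b::field"
  assumes fh: "field_hom f"
begin

lemma mp_coeff: "coeff (map_poly f P) i = f (coeff P i)"
  by (simp add: coeff_map_poly fh_0[OF fh])

lemma mp_add: "map_poly f (P + Q) = map_poly f P + map_poly f Q"
  by (rule poly_eqI) (simp add: mp_coeff fh_add[OF fh])

lemma mp_diff: "map_poly f (P - Q) = map_poly f P - map_poly f Q"
  by (rule poly_eqI) (simp add: mp_coeff fh_diff[OF fh])

lemma mp_mult: "map_poly f (P * Q) = map_poly f P * map_poly f Q"
  by (rule poly_eqI) (simp add: mp_coeff coeff_mult fh_sum[OF fh] fh_mult[OF fh])

lemma mp_const: "map_poly f [:a:] = [:f a:]"
  by (rule poly_eqI) (simp add: mp_coeff fh_0[OF fh] coeff_pCons split: nat.splits)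

lemma mp_monom: "map_poly f (monom a k) = monom (f a) k"
  by (rule poly_eqI) (simp add: mp_coeff fh_0[OF fh])

lemma mp_degree: "degree (map_poly f P) = degree P"
  by (rule degree_map_poly) (simp add: fh_eq0[OF fh])

lemma poly_mp_sum:
  assumes "degree P < k"
  shows "poly (map_poly f P) x = (\<Sum>i<k. f (coeff P i) * x ^ i)"
proof -
  have "poly (map_poly f P) x = (\<Sum>i\<le>degree P. f (coeff P i) * x ^ i)"
    by (simp add: poly_altdef mp_degree mp_coeff)
  also have "\<dots> = (\<Sum>i<k. f (coeff P i) * x ^ i)"
    using assms by (intro sum.mono_neutral_left) (auto simp: coeff_eq_0 fh_0[OF fh])
  finally show ?thesis .
qed

end

lemma poly_mp_hom:
  fixes g :: "'b::field \<Rightarrow> 'c::field" and f :: "'a::field \<Rightarrow> 'b"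
  assumes fh: "field_hom f" and gh: "field_hom g"
  shows "g (poly (map_poly f P) x) = poly (map_poly (g \<circ> f) P) (g x)"
proof -
  have gf: "field_hom (g \<circ> f)" using field_hom_comp[OF gh fh] .
  have "g (poly (map_poly f P) x) = (\<Sum>i\<le>degree P. g (f (coeff P i)) * g x ^ i)"
    by (simp add: poly_altdef mp_degree[OF fh] fh_sum[OF gh] fh_mult[OF gh] fh_power[OF gh]
        mp_coeff[OF fh])
  also have "\<dots> = poly (map_poly (g \<circ> f) P) (g x)"
    by (simp add: poly_altdef mp_degree[OF gf] mp_coeff[OF gf])
  finally show ?thesis .
qed

text \<open>An injective linear map of a finitely spanned space into itself is onto.  It gives both
  the inverses in L = K[u] and the inverses in the cyclic algebra.\<close>
lemma inj_endo_span_surj: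
  fixes scale :: "'k::field \<Rightarrow> 'v::ab_group_add \<Rightarrow> 'v"
  assumes vs: "vector_space scale"
    and add: "\<And>x y. T (x + y) = T x + T y"
    and sc: "\<And>a x. T (scale a x) = scale a (T x)"
    and fin: "finite S"
    and into: "T ` (module.span scale S) \<subseteq> module.span scale S"
    and inj: "inj_on T (module.span scale S)"
  shows "T ` (module.span scale S) = module.span scale S"
proof -
  interpret V: vector_space scale by fact
  have hom: "module_hom scale scale T"
    using add sc by (simp add: module_hom_iff V.module_axioms)
  obtain B where B: "B \<subseteq> V.span S" "V.independent B" "V.span S \<subseteq> V.span B"
    using V.basis_exists by metis
  have finB: "finite B"
    using V.independent_span_bound[OF fin B(2)] B(1) by auto
  have spanBS: "V.span B = V.span S"
    using V.span_minimal[OF B(1) V.subspace_span] B(3) by (rule subset_antisym)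
  have indTB: "V.independent (T ` B)"
    using module_hom.independent_injective_image[OF hom B(2)] inj spanBS by simp
  have cardTB: "card (T ` B) = card B"
    using card_image[OF inj_on_subset[OF inj B(1)]] .
  have TBsub: "T ` B \<subseteq> V.span B" using into B(1) spanBS V.span_superset by blast
  txt \<open>An independent set of card B elements inside span B spans it: a vector outside
    would extend it to an independent set that is too large.\<close>
  have "V.span B \<subseteq> V.span (T ` B)"
  proof
    fix x assume x: "x \<in> V.span B"
    show "x \<in> V.span (T ` B)"
    proof (rule ccontr)
      assume nx: "x \<notin> V.span (T ` B)"
      then have "V.independent (insert x (T ` B))"
        using V.independent_insertI indTB by blast
      then have "card (insert x (T ` B)) \<le> card B"
        using V.independent_span_bound[OF finB] x TBsub by auto
      moreover have "x \<notin> T ` B" using nx V.span_superset by blast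
      then have "card (insert x (T ` B)) = card B + 1" using finB cardTB by simp
      ultimately show False by simp
    qed
  qed
  moreover have "V.span (T ` B) = T ` V.span B"
    using module_hom.span_image[OF hom] .
  ultimately show ?thesis using into spanBS by auto
qed

section \<open>Arithmetic of the exponent m = p^s + 1\<close>

text \<open>If p^j divides x, the binomial terms of (1 + x)^p of degree >= 2 are divisible by
  p^(j+2); for k = p this needs j p >= j + 2, which fails only for p = 2, j = 1.\<close>
lemma binomial_tail_dvd:
  fixes p j x :: nat
  assumes p: "prime p" and j: "1 \<le> j" and j2: "p = 2 \<longrightarrow> 2 \<le> j" and x: "p ^ j dvd x"
  shows "p ^ (j + 2) dvd (\<Sum>k\<in>{2..p}. (p choose k) * x ^ k)"
proof (rule dvd_sum)
  fix k assume k: "k \<in> {2..p}"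
  have p2: "2 \<le> p" using p prime_ge_2_nat by blast
  have xk: "p ^ (j * k) dvd x ^ k" using x by (simp add: power_mult dvd_power_same)
  show "p ^ (j + 2) dvd (p choose k) * x ^ k"
  proof (cases "k < p")
    case True
    have "p dvd (p choose k)" using dvd_choose_prime[OF True] k p p2 by auto
    moreover have "p ^ (j + 1) dvd p ^ (j * k)"
    proof (rule le_imp_power_dvd)
      have "j * 2 \<le> j * k" using k by auto
      then show "j + 1 \<le> j * k" using j by linarith
    qed
    ultimately have "p * p ^ (j + 1) dvd (p choose k) * x ^ k"
      using xk by (meson dvd_trans mult_dvd_mono)
    then show ?thesis by (simp add: mult.commute)
  next
    case False
    then have kp: "k = p" using k by auto
    have "j + 2 \<le> j * p"
    proof (cases "p = 2")
      case False
      then have "j * 3 \<le> j * p" using p2 by auto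
      then show ?thesis using j by linarith
    qed (use j2 in auto)
    then have "p ^ (j + 2) dvd x ^ k" using kp xk le_imp_power_dvd dvd_trans by blast
    then show ?thesis by (rule dvd_mult)
  qed
qed

lemma binomial_lift:
  fixes p j y :: nat
  assumes p: "prime p" and j: "1 \<le> j" and j2: "p = 2 \<longrightarrow> 2 \<le> j"
  shows "\<exists>z. (1 + p ^ j * y) ^ p = 1 + p ^ (j + 1) * y + p ^ (j + 2) * z"
proof -
  define x where "x = p ^ j * y"
  have p2: "2 \<le> p" using p prime_ge_2_nat by blast
  have "(x + 1) ^ p = (\<Sum>k\<le>p. of_nat (p choose k) * x ^ k * 1 ^ (p - k))"
    by (rule binomial_ring)
  also have "\<dots> = (\<Sum>k\<le>p. (p choose k) * x ^ k)" by simp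
  also have "{..p} = {0, 1} \<union> {2..p}" using p2 by auto
  also have "(\<Sum>k\<in>{0, 1} \<union> {2..p}. (p choose k) * x ^ k)
      = 1 + p * x + (\<Sum>k\<in>{2..p}. (p choose k) * x ^ k)"
    by (subst sum.union_disjoint) auto
  finally have eq: "(1 + x) ^ p = 1 + p * x + (\<Sum>k\<in>{2..p}. (p choose k) * x ^ k)"
    by (simp add: add.commute)
  obtain z where "(\<Sum>k\<in>{2..p}. (p choose k) * x ^ k) = p ^ (j + 2) * z"
    using binomial_tail_dvd[OF p j j2, of x] by (auto simp: x_def elim: dvdE)
  with eq show ?thesis
    by (intro exI[of _ z]) (simp add: x_def power_Suc mult.commute mult.left_commute)
qed

text \<open>The geometric sums S(d) = 1 + m + ... + m^(d-1); the exponent of u in sigma^d(u).\<close>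
definition geom_sum :: "nat \<Rightarrow> nat \<Rightarrow> nat" where
  "geom_sum m d = (\<Sum>j<d. m ^ j)"

lemma geom_sum_add: "geom_sum m (a + b) = geom_sum m a + m ^ a * geom_sum m b"
  by (induction b) (simp_all add: geom_sum_def algebra_simps power_add)

lemma geom_sum_1 [simp]: "geom_sum m 1 = 1"
  by (simp add: geom_sum_def)

lemma power_gcd_eq_1:
  fixes x :: "'a::field"
  shows "x ^ a = 1 \<Longrightarrow> x ^ b = 1 \<Longrightarrow> x ^ gcd a b = 1"
proof (induction a b rule: gcd_nat_induct)
  case (step m k)
  have "x ^ m = (x ^ k) ^ (m div k) * x ^ (m mod k)"
    by (metis div_mult_mod_eq power_add power_mult mult.commute)
  then have "x ^ (m mod k) = 1" using step by simp
  then show ?case using step by (metis gcd_red_nat)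
qed simp

text \<open>The arithmetic hypotheses of the theorem: m = p^s + 1 with s >= 1, and s >= 2 if p = 2,
  so that exponent lifting applies from the first step on.\<close>
locale lifting_exponent =
  fixes p s :: nat
  assumes p: "prime p" and s1: "1 \<le> s" and s2: "p = 2 \<longrightarrow> s \<noteq> 1"
begin

abbreviation m where "m \<equiv> p ^ s + 1"

lemma p_gt1: "1 < p" using prime_gt_1_nat[OF p] .

lemma m_power_ppow: "\<exists>y. m ^ (p ^ k) = 1 + p ^ (s + k) * y \<and> \<not> p dvd y"
proof (induction k)
  case 0
  show ?case using p_gt1 by (intro exI[of _ 1]) (simp add: add.commute)
next
  case (Suc k)
  then obtain y where y: "m ^ (p ^ k) = 1 + p ^ (s + k) * y" "\<not> p dvd y" by blast
  have "\<exists>z. (1 + p ^ (s + k) * y) ^ p = 1 + p ^ (s + k + 1) * y + p ^ (s + k + 2) * z"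
    using binomial_lift[OF p, of "s + k" y] s1 s2 by auto
  then obtain z where z: "(1 + p ^ (s + k) * y) ^ p = 1 + p ^ (s + k + 1) * y + p ^ (s + k + 2) * z"
    by blast
  have "m ^ (p ^ Suc k) = (m ^ (p ^ k)) ^ p" by (metis power_Suc2 power_mult)
  also have "\<dots> = 1 + p ^ (s + Suc k) * (y + p * z)"
    using y z by (simp add: algebra_simps power_Suc)
  finally show ?case
    using y(2) by (intro exI[of _ "y + p * z"]) (auto simp: dvd_add_left_iff)
qed

lemma coprime_ppow_m_power: "coprime (p ^ n) (m ^ a)"
proof -
  have "\<not> p dvd m"
  proof
    assume "p dvd m"
    moreover have "p dvd p ^ s" using s1 by (simp add: dvd_power)
    ultimately have "p dvd 1" by (metis dvd_add_right_iff)
    then show False using p_gt1 by simp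
  qed
  then show ?thesis
    using p by (simp add: prime_imp_coprime coprime_power_left_iff coprime_power_right_iff)
qed

lemma m_power_eq: "m ^ d = 1 + p ^ s * geom_sum m d"
  by (induction d) (simp_all add: geom_sum_def algebra_simps)

lemma geom_sum_ppow: "\<exists>y. geom_sum m (p ^ k) = p ^ k * y \<and> \<not> p dvd y"
proof -
  obtain y where y: "m ^ (p ^ k) = 1 + p ^ (s + k) * y" "\<not> p dvd y" using m_power_ppow by blast
  have "1 + p ^ s * geom_sum m (p ^ k) = 1 + p ^ s * (p ^ k * y)"
    using y(1) m_power_eq[of "p ^ k"] by (simp only: power_add mult.assoc)
  then have "p ^ s * geom_sum m (p ^ k) = p ^ s * (p ^ k * y)" by (rule add_left_imp_eq)
  moreover have "p ^ s \<noteq> 0" using p_gt1 by simp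
  ultimately have "geom_sum m (p ^ k) = p ^ k * y" by (metis mult_left_cancel)
  then show ?thesis using y(2) by blast
qed

lemma geom_sum_dvd_gcd:
  "p ^ n dvd geom_sum m a \<Longrightarrow> p ^ n dvd geom_sum m b \<Longrightarrow> p ^ n dvd geom_sum m (gcd a b)"
proof (induction a b rule: gcd_nat_induct)
  case (step a k)
  have mult: "p ^ n dvd geom_sum m (k * q)" for q
  proof (induction q)
    case (Suc q)
    have "geom_sum m (k * Suc q) = geom_sum m (k * q) + m ^ (k * q) * geom_sum m k"
      using geom_sum_add[of m "k * q" k] by (simp add: algebra_simps)
    then show ?case using Suc step.prems(2) by simp
  qed (simp add: geom_sum_def)
  have "p ^ n dvd geom_sum m (k * (a div k) + a mod k)" using step.prems by simp
  then have "p ^ n dvd m ^ (k * (a div k)) * geom_sum m (a mod k)"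
    using mult[of "a div k"] by (metis geom_sum_add dvd_add_right_iff)
  then have "p ^ n dvd geom_sum m (a mod k)"
    using coprime_ppow_m_power coprime_dvd_mult_right_iff by blast
  then show ?case using step by (metis gcd_red_nat)
qed simp

lemma ppow_dvd_geom_sum: "p ^ n dvd geom_sum m (p ^ n)"
  using geom_sum_ppow[of n] by auto

lemma ppow_not_dvd_geom_sum:
  assumes d: "0 < d" "d < p ^ n"
  shows "\<not> p ^ n dvd geom_sum m d"
proof
  assume "p ^ n dvd geom_sum m d"
  then have dvd: "p ^ n dvd geom_sum m (gcd d (p ^ n))"
    using geom_sum_dvd_gcd ppow_dvd_geom_sum by blast
  obtain i where i: "i \<le> n" "gcd d (p ^ n) = p ^ i"
    using divides_primepow_nat[OF p] gcd_dvd2 by blast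
  have "gcd d (p ^ n) \<le> d" using d by (simp add: gcd_le1_nat)
  then have "i \<noteq> n" using i d by auto
  then have "i < n" using i by auto
  obtain y where y: "geom_sum m (p ^ i) = p ^ i * y" "\<not> p dvd y" using geom_sum_ppow by blast
  have "p ^ n dvd p ^ i * y" using dvd i(2) y(1) by simp
  then have "p ^ Suc i dvd p ^ i * y"
    using \<open>i < n\<close> by (meson Suc_leI le_imp_power_dvd dvd_trans)
  then have "p dvd y" using p_gt1 by (simp add: power_Suc)
  then show False using y(2) by blast
qed

text \<open>m has multiplicative order dividing p^n modulo p^n, so m^a mod p^n depends on a mod p^n.\<close>
lemma m_power_mod_reduce: "m ^ (a mod p ^ n) mod p ^ n = m ^ a mod p ^ n"
proof -
  have "p ^ n dvd p ^ s * geom_sum m (p ^ n)" using ppow_dvd_geom_sum by simp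
  then obtain k where "p ^ s * geom_sum m (p ^ n) = p ^ n * k" by (auto elim: dvdE)
  then have "m ^ (p ^ n) = 1 + k * p ^ n" using m_power_eq[of "p ^ n"] by (simp add: mult.commute)
  then have one: "m ^ (p ^ n) mod p ^ n = 1 mod p ^ n" by (simp only: mod_mult_self1)
  have "m ^ a = m ^ (a mod p ^ n) * (m ^ (p ^ n)) ^ (a div p ^ n)"
    by (metis div_mult_mod_eq power_add power_mult mult.commute add.commute)
  then have "m ^ a mod p ^ n = (m ^ (a mod p ^ n) * ((m ^ (p ^ n)) mod p ^ n) ^ (a div p ^ n)) mod p ^ n"
    by (metis mod_mult_right_eq power_mod)
  then show ?thesis using one by (simp add: mod_mult_right_eq power_mod)
qed

end

section \<open>Cyclic algebras over Laurent series fields\<close>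

definition cyc_mono :: "nat \<Rightarrow> 'b::field fls \<Rightarrow> (nat \<Rightarrow> 'b fls)" where
  "cyc_mono i a = (\<lambda>k. if k = i then a else 0)"

lemma sum_fun_apply: "(\<Sum>i\<in>A. f i) x = (\<Sum>i\<in>A. f i x)"
  by (induction A rule: infinite_finite_induct) auto

lemma sum_delta2:
  "i < N \<Longrightarrow> j < N \<Longrightarrow>
    (\<Sum>i'<N. \<Sum>j'<(N::nat). if i' = i \<and> j' = j then V else (0::'c::comm_monoid_add)) = V"
proof -
  assume "i < N" "j < N"
  have "(\<Sum>j'<N. if i' = i \<and> j' = j then V else 0) = (if i' = i then V else 0)" for i'
    using \<open>j < N\<close> by (cases "i' = i") (simp_all add: sum.delta)
  then show ?thesis using \<open>i < N\<close> by (simp add: sum.delta)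
qed

lemma div_add_split: "(a + b) div (N::nat) = a div N + (a mod N + b) div N"
proof (cases "N = 0")
  case False
  have "a + b = (a mod N + b) + N * (a div N)" by simp
  then show ?thesis using False by (metis div_mult_self2 add.commute)
qed simp

lemma index_from_weight:
  assumes "(i::nat) < N" "j < N" "int N * a + int i = int N * b + int j"
  shows "i = j"
proof -
  have "int i = (int N * a + int i) mod int N" using assms(1) by simp
  also have "\<dots> = int j" using assms(2,3) by simp
  finally show ?thesis by simp
qed

locale cyclic_algebra =
  fixes N :: nat and sigma :: "'b::field \<Rightarrow> 'b"
  assumes N_pos: "0 < N" and field_hom_sigma: "field_hom sigma" and sigma_order: "sigma ^^ N = id"
begin

text \<open>Conjugation by v^i acts on L((t)) coefficientwise by sigma^i.\<close>
abbreviation twist :: "nat \<Rightarrow> 'b fls \<Rightarrow> 'b fls" where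
  "twist i \<equiv> fls_cmap (sigma ^^ i)"

abbreviation cm :: "(nat \<Rightarrow> 'b fls) \<Rightarrow> (nat \<Rightarrow> 'b fls) \<Rightarrow> (nat \<Rightarrow> 'b fls)" where
  "cm \<equiv> cyc_mult N sigma"

lemma field_hom_sigma_pow: "field_hom (sigma ^^ i)"
  by (rule field_hom_funpow[OF field_hom_sigma])

lemma sigma_pow_mod: "sigma ^^ (i mod N) = sigma ^^ i"
proof -
  have "sigma ^^ i = (sigma ^^ (i mod N)) \<circ> ((sigma ^^ N) ^^ (i div N))"
    by (metis div_mult_mod_eq funpow_add funpow_mult add.commute mult.commute)
  then show ?thesis using sigma_order by simp
qed

lemma twist_twist: "twist i (twist j a) = twist (i + j) a"
  by (simp add: cmap_comp[symmetric] fh_0[OF field_hom_sigma_pow] funpow_add)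

lemmas twist_mult = cmap_mult[OF field_hom_sigma_pow] and twist_add = cmap_add[OF field_hom_sigma_pow]
  and twist_0 = cmap_0[OF field_hom_sigma_pow] and twist_1 = cmap_1[OF field_hom_sigma_pow]

lemma twist_X_power: "twist i (fls_X ^ e) = fls_X ^ e"
  by (simp add: cmap_power[OF field_hom_sigma_pow] cmap_X[OF field_hom_sigma_pow])

text \<open>The factor t = v^N produced when i + j wraps around.\<close>
lemma carry_factor:
  "i < N \<Longrightarrow> j < N \<Longrightarrow> (if N \<le> i + j then fls_X else 1) = (fls_X::'b fls) ^ ((i + j) div N)"
proof -
  assume "i < N" "j < N"
  then have "(i + j) div N < 2" by (simp add: div_less_iff_less_mult mult.commute)
  moreover have "N \<le> i + j \<longleftrightarrow> 0 < (i + j) div N" using N_pos by (simp add: div_greater_zero_iff)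
  ultimately show ?thesis by (cases "(i + j) div N") auto
qed

lemma cm_expand:
  "cm x y k = (if k < N then (\<Sum>i<N. \<Sum>j<N. if (i + j) mod N = k
      then fls_X ^ ((i + j) div N) * x i * twist i (y j) else 0) else 0)"
  unfolding cyc_mult_def by (simp add: carry_factor cong: if_cong)

lemma if_add0: "(if c then a + b else 0) = (if c then a else 0) + (if c then b else (0::'a::monoid_add))"
  by simp

lemma cm_zero_left: "cm 0 y = 0"
  unfolding cyc_mult_def
  by (rule ext) (simp only: zero_fun_apply mult_zero_right mult_zero_left if_cancel sum.neutral_const)

lemma cm_zero_right: "cm x 0 = 0"
  unfolding cyc_mult_def
  by (rule ext) (simp only: zero_fun_apply twist_0 mult_zero_right if_cancel sum.neutral_const)

lemma cm_add_left: "cm (x + y) z = cm x z + cm y z"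
  unfolding cyc_mult_def
  by (rule ext) (simp only: plus_fun_apply distrib_left distrib_right if_add0 sum.distrib)

lemma cm_add_right: "cm x (y + z) = cm x y + cm x z"
  unfolding cyc_mult_def
  by (rule ext) (simp only: plus_fun_apply twist_add distrib_left distrib_right if_add0 sum.distrib)

lemma cm_diff_right: "cm x (y1 - y2) = cm x y1 - cm x y2"
  using cm_add_right[of x "y1 - y2" y2] by (simp add: eq_diff_eq)

lemma cm_sum_left: "cm (\<Sum>i\<in>A. X i) y = (\<Sum>i\<in>A. cm (X i) y)"
proof (induction A rule: infinite_finite_induct)
  case (insert a F)
  have "sum X (insert a F) = X a + sum X F"
    and "(\<Sum>i\<in>insert a F. cm (X i) y) = cm (X a) y + (\<Sum>i\<in>F. cm (X i) y)"
    using insert(1,2) by (rule sum.insert)+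
  then show ?case using insert(3) by (simp only: cm_add_left)
next
  case (infinite A)
  then show ?case by (simp add: cm_zero_left[unfolded zero_fun_def])
qed (simp only: sum.empty cm_zero_left)

lemma cm_sum_right: "cm x (\<Sum>i\<in>A. Y i) = (\<Sum>i\<in>A. cm x (Y i))"
proof (induction A rule: infinite_finite_induct)
  case (insert a F)
  have "sum Y (insert a F) = Y a + sum Y F"
    and "(\<Sum>i\<in>insert a F. cm x (Y i)) = cm x (Y a) + (\<Sum>i\<in>F. cm x (Y i))"
    using insert(1,2) by (rule sum.insert)+
  then show ?case using insert(3) by (simp only: cm_add_right)
next
  case (infinite A)
  then show ?case by (simp add: cm_zero_right[unfolded zero_fun_def])
qed (simp only: sum.empty cm_zero_right)

lemma cm_scal_left: "cm (\<lambda>k. \<kappa> * x k) y = (\<lambda>k. \<kappa> * cm x y k)"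
proof -
  have h: "(if c then E * (\<kappa> * a) * t else 0) = \<kappa> * (if c then E * a * t else (0::'b fls))"
    for c E a t by (simp add: mult_ac)
  have h2: "(if P then \<kappa> * S else 0) = \<kappa> * (if P then S else (0::'b fls))" for P S
    by simp
  show ?thesis
    by (rule ext) (simp only: cyc_mult_def h sum_distrib_left[symmetric] h2)
qed

lemma cm_scal_right:
  assumes "\<And>i. twist i \<kappa> = \<kappa>"
  shows "cm x (\<lambda>k. \<kappa> * y k) = (\<lambda>k. \<kappa> * cm x y k)"
proof -
  have h: "(if c then E * a * twist i (\<kappa> * b) else 0) = \<kappa> * (if c then E * a * twist i b else (0::'b fls))"
    for c E a b i by (simp add: mult_ac twist_mult assms)
  have h2: "(if P then \<kappa> * S else 0) = \<kappa> * (if P then S else (0::'b fls))" for P S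
    by simp
  show ?thesis
    by (rule ext) (simp only: cyc_mult_def h sum_distrib_left[symmetric] h2)
qed

lemma cm_mono:
  assumes "i < N" "j < N"
  shows "cm (cyc_mono i a) (cyc_mono j b)
    = cyc_mono ((i + j) mod N) (fls_X ^ ((i + j) div N) * a * twist i b)"
proof (rule ext)
  fix k
  define W where "W = (if N \<le> i + j then fls_X else 1) * a * twist i b"
  have "(\<Sum>i'<N. \<Sum>j'<N. if (i' + j') mod N = k
          then (if N \<le> i' + j' then fls_X else 1) * cyc_mono i a i' * twist i' (cyc_mono j b j')
          else 0)
      = (\<Sum>i'<N. \<Sum>j'<N. if i' = i \<and> j' = j then (if (i + j) mod N = k then W else 0) else 0)"
    unfolding W_def by (intro sum.cong refl) (auto simp: cyc_mono_def twist_0)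
  also have "\<dots> = (if (i + j) mod N = k then W else 0)"
    using assms by (rule sum_delta2)
  finally have "cm (cyc_mono i a) (cyc_mono j b) k
      = (if k < N then (if (i + j) mod N = k then W else 0) else 0)"
    by (simp only: cyc_mult_def)
  also have "\<dots> = cyc_mono ((i + j) mod N) W k"
    using N_pos by (auto simp: cyc_mono_def)
  finally have "cm (cyc_mono i a) (cyc_mono j b) k = cyc_mono ((i + j) mod N) W k" .
  then show "cm (cyc_mono i a) (cyc_mono j b) k
      = cyc_mono ((i + j) mod N) (fls_X ^ ((i + j) div N) * a * twist i b) k"
    unfolding W_def carry_factor[OF assms] .
qed

lemma decomp: "x \<in> cyc_carrier N \<Longrightarrow> x = (\<Sum>i<N. cyc_mono i (x i))"
  by (rule ext) (auto simp: cyc_mono_def sum_fun_apply cyc_carrier_def not_less)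

lemma decomp_nth: "j < N \<Longrightarrow> (\<Sum>i<N. cyc_mono i (w i)) j = w j"
  by (simp add: sum_fun_apply cyc_mono_def sum.delta)

text \<open>Associativity on monomials: both sides carry the same total power of t.\<close>
lemma cm_assoc_mono:
  assumes "i < N" "j < N" "l < N"
  shows "cm (cm (cyc_mono i a) (cyc_mono j b)) (cyc_mono l c)
    = cm (cyc_mono i a) (cm (cyc_mono j b) (cyc_mono l c))"
proof -
  have m1: "(i + j) mod N < N" "(j + l) mod N < N" using N_pos by auto
  have idx: "((i + j) mod N + l) mod N = (i + (j + l) mod N) mod N"
    by (simp add: mod_add_left_eq mod_add_right_eq add.assoc)
  have carry: "((i + j) mod N + l) div N + (i + j) div N = (i + (j + l) mod N) div N + (j + l) div N"
    using div_add_split[of "i + j" l N] div_add_split[of "j + l" i N]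
    by (simp add: add_ac)
  have tw: "twist ((i + j) mod N) c = twist (i + j) c" by (simp add: sigma_pow_mod)
  have "cm (cm (cyc_mono i a) (cyc_mono j b)) (cyc_mono l c) = cyc_mono ((i + (j + l) mod N) mod N)
      (fls_X ^ (((i + j) mod N + l) div N + (i + j) div N) * a * twist i b * twist (i + j) c)"
    using assms m1 by (simp add: cm_mono tw idx power_add mult_ac)
  also have "\<dots> = cm (cyc_mono i a) (cm (cyc_mono j b) (cyc_mono l c))"
    using assms m1 by (simp add: carry cm_mono twist_mult twist_X_power twist_twist power_add mult_ac)
  finally show ?thesis .
qed

lemma cm_assoc:
  assumes "x \<in> cyc_carrier N" "y \<in> cyc_carrier N" "z \<in> cyc_carrier N"
  shows "cm (cm x y) z = cm x (cm y z)"
proof -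
  define A where "A i = cyc_mono i (x i)" for i
  define B where "B i = cyc_mono i (y i)" for i
  define C where "C i = cyc_mono i (z i)" for i
  have xyz: "x = (\<Sum>i<N. A i)" "y = (\<Sum>i<N. B i)" "z = (\<Sum>i<N. C i)"
    using decomp[OF assms(1)] decomp[OF assms(2)] decomp[OF assms(3)] by (simp_all add: A_def B_def C_def)
  have sum2: "cm (\<Sum>i\<in>I. P i) (\<Sum>j\<in>J. Q j) = (\<Sum>i\<in>I. \<Sum>j\<in>J. cm (P i) (Q j))"
    for I J and P Q :: "nat \<Rightarrow> nat \<Rightarrow> 'b fls"
    unfolding cm_sum_left unfolding cm_sum_right ..
  have "cm (cm x y) z = cm (\<Sum>i<N. \<Sum>j<N. cm (A i) (B j)) (\<Sum>l<N. C l)"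
    unfolding xyz sum2 ..
  also have "\<dots> = (\<Sum>i<N. \<Sum>j<N. \<Sum>l<N. cm (cm (A i) (B j)) (C l))"
    by (simp only: cm_sum_left) (simp only: cm_sum_right)
  also have "\<dots> = (\<Sum>i<N. \<Sum>j<N. \<Sum>l<N. cm (A i) (cm (B j) (C l)))"
    by (intro sum.cong refl) (simp add: A_def B_def C_def cm_assoc_mono)
  also have "\<dots> = cm (\<Sum>i<N. A i) (\<Sum>j<N. \<Sum>l<N. cm (B j) (C l))"
    by (simp only: cm_sum_left) (simp only: cm_sum_right)
  also have "\<dots> = cm x (cm y z)"
    unfolding xyz sum2 ..
  finally show ?thesis .
qed

lemma cm_carrier: "cm x y \<in> cyc_carrier N"
  by (simp add: cyc_carrier_def cyc_mult_def)

lemma one_mono: "cyc_one = cyc_mono 0 1"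
  by (rule ext) (simp add: cyc_one_def cyc_mono_def)

lemma one_carrier: "cyc_one \<in> cyc_carrier N"
  using N_pos by (simp add: cyc_carrier_def cyc_one_def)

lemma cm_one_right:
  assumes "x \<in> cyc_carrier N"
  shows "cm x cyc_one = x"
proof -
  have "cm x cyc_one = (\<Sum>i<N. cm (cyc_mono i (x i)) (cyc_mono 0 1))"
    by (subst decomp[OF assms]) (simp only: one_mono cm_sum_left)
  also have "\<dots> = (\<Sum>i<N. cyc_mono i (x i))"
    using N_pos by (intro sum.cong refl) (simp add: cm_mono twist_1)
  finally show ?thesis using decomp[OF assms] by simp
qed

lemma cm_one_left:
  assumes "x \<in> cyc_carrier N"
  shows "cm cyc_one x = x"
proof -
  have "cm cyc_one x = (\<Sum>i<N. cm (cyc_mono 0 1) (cyc_mono i (x i)))"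
    by (subst decomp[OF assms]) (simp only: one_mono cm_sum_right)
  also have "\<dots> = (\<Sum>i<N. cyc_mono i (x i))"
    using N_pos by (intro sum.cong refl) (simp add: cm_mono)
  finally show ?thesis using decomp[OF assms] by simp
qed

text \<open>The v-adic valuation of the i-th component x_i v^i (recall v^N = t).\<close>
definition vval :: "(nat \<Rightarrow> 'b fls) \<Rightarrow> nat \<Rightarrow> int" where
  "vval x i = int N * fls_subdegree (x i) + int i"

lemma min_vval_index:
  assumes "x \<in> cyc_carrier N" "x \<noteq> 0"
  obtains i0 where "i0 < N" "x i0 \<noteq> 0" "\<And>i. i < N \<Longrightarrow> x i \<noteq> 0 \<Longrightarrow> vval x i0 \<le> vval x i"
proof -
  define I where "I = {i. i < N \<and> x i \<noteq> 0}"
  have fin: "finite I" by (simp add: I_def)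
  obtain k where "x k \<noteq> 0" using assms(2) by (auto simp: fun_eq_iff)
  then have ne: "I \<noteq> {}" using assms(1) by (auto simp: I_def cyc_carrier_def not_less[symmetric])
  obtain i0 where i0: "i0 \<in> I" "vval x i0 = Min (vval x ` I)"
    using Min_in[OF _ ] fin ne by (metis empty_is_image finite_imageI imageE)
  have "vval x i0 \<le> vval x i" if "i < N" "x i \<noteq> 0" for i
    using that fin i0(2) by (auto simp: I_def intro: Min_le)
  then show ?thesis using that i0(1) by (auto simp: I_def)
qed

definition cm_term :: "(nat \<Rightarrow> 'b fls) \<Rightarrow> (nat \<Rightarrow> 'b fls) \<Rightarrow> nat \<Rightarrow> nat \<Rightarrow> 'b fls" where
  "cm_term x y i j = fls_X ^ ((i + j) div N) * x i * twist i (y j)"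

lemma cm_term_subdegree:
  assumes "x i \<noteq> 0" "y j \<noteq> 0"
  shows "cm_term x y i j \<noteq> 0"
    and "int N * fls_subdegree (cm_term x y i j) + int ((i + j) mod N) = vval x i + vval y j"
proof -
  have X0: "(fls_X :: 'b fls) ^ ((i + j) div N) \<noteq> 0" by (rule fls_X_pow_nonzero)
  have T0: "twist i (y j) \<noteq> 0" using assms(2) cmap_eq0[OF field_hom_sigma_pow] by blast
  have p1: "fls_X ^ ((i + j) div N) * x i \<noteq> 0" using X0 assms(1) by (rule no_zero_divisors)
  show "cm_term x y i j \<noteq> 0" unfolding cm_term_def using p1 T0 by (rule no_zero_divisors)
  have "fls_subdegree (cm_term x y i j)
      = int ((i + j) div N) + fls_subdegree (x i) + fls_subdegree (y j)"
    unfolding cm_term_def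
    using fls_subdegree_mult[OF p1 T0] fls_subdegree_mult[OF X0 assms(1)]
    by (simp add: fls_subdegree_fls_X_pow cmap_subdegree[OF field_hom_sigma_pow])
  moreover have "int N * int ((i + j) div N) + int ((i + j) mod N) = int i + int j"
    by (metis div_mult_mod_eq of_nat_add of_nat_mult mult.commute)
  ultimately show "int N * fls_subdegree (cm_term x y i j) + int ((i + j) mod N)
      = vval x i + vval y j"
    by (simp add: vval_def algebra_simps)
qed

text \<open>If i0, j0 minimise the valuation, the pair (i0, j0) is the only one contributing to the
  coefficient of v^k0 t^r0 in x y, where k0 and r0 are the position of their product.\<close>
lemma cm_term_isolated:
  assumes i0: "i0 < N" "x i0 \<noteq> 0" "\<And>i. i < N \<Longrightarrow> x i \<noteq> 0 \<Longrightarrow> vval x i0 \<le> vval x i"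
    and j0: "j0 < N" "y j0 \<noteq> 0" "\<And>j. j < N \<Longrightarrow> y j \<noteq> 0 \<Longrightarrow> vval y j0 \<le> vval y j"
    and ij: "i < N" "j < N" "(i + j) mod N = (i0 + j0) mod N" "(i, j) \<noteq> (i0, j0)"
  shows "cm_term x y i j $$ fls_subdegree (cm_term x y i0 j0) = 0"
proof (cases "x i = 0 \<or> y j = 0")
  case True
  then show ?thesis by (auto simp: cm_term_def twist_0)
next
  case False
  have "vval x i0 \<noteq> vval x i \<or> vval y j0 \<noteq> vval y j"
  proof (rule ccontr)
    assume "\<not> (vval x i0 \<noteq> vval x i \<or> vval y j0 \<noteq> vval y j)"
    then have "i0 = i" "j0 = j"
      using index_from_weight[OF i0(1) ij(1)] index_from_weight[OF j0(1) ij(2)]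
      by (auto simp: vval_def)
    then show False using ij(4) by simp
  qed
  then have "vval x i0 + vval y j0 < vval x i + vval y j"
    using i0(3)[OF ij(1)] j0(3)[OF ij(2)] False by fastforce
  then have "int N * fls_subdegree (cm_term x y i0 j0) < int N * fls_subdegree (cm_term x y i j)"
    using cm_term_subdegree(2)[of x i0 y j0, OF i0(2) j0(2)] cm_term_subdegree(2)[of x i y j] False ij(3)
    by linarith
  then show ?thesis by (simp add: mult_less_cancel_left)
qed

text \<open>D has no zero divisors: the lowest terms of x and y multiply to a lowest term of xy.\<close>
lemma cm_no_zero_divisors:
  assumes xc: "x \<in> cyc_carrier N" and yc: "y \<in> cyc_carrier N" and "x \<noteq> 0" "y \<noteq> 0"
  shows "cm x y \<noteq> 0"
proof -
  obtain i0 where i0: "i0 < N" "x i0 \<noteq> 0" "\<And>i. i < N \<Longrightarrow> x i \<noteq> 0 \<Longrightarrow> vval x i0 \<le> vval x i"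
    using min_vval_index[OF xc \<open>x \<noteq> 0\<close>] by blast
  obtain j0 where j0: "j0 < N" "y j0 \<noteq> 0" "\<And>j. j < N \<Longrightarrow> y j \<noteq> 0 \<Longrightarrow> vval y j0 \<le> vval y j"
    using min_vval_index[OF yc \<open>y \<noteq> 0\<close>] by blast
  define k0 where "k0 = (i0 + j0) mod N"
  define r0 where "r0 = fls_subdegree (cm_term x y i0 j0)"
  have "cm x y k0 $$ r0 = (\<Sum>i<N. \<Sum>j<N. if (i + j) mod N = k0 then cm_term x y i j $$ r0 else 0)"
    unfolding cm_expand cm_term_def using N_pos
    by (simp add: k0_def fls_nth_sum if_distrib[of "\<lambda>F. F $$ r0"] cong: if_cong)
  also have "\<dots> = (\<Sum>i<N. \<Sum>j<N. if i = i0 \<and> j = j0 then cm_term x y i0 j0 $$ r0 else 0)"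
    using cm_term_isolated[OF i0 j0] by (intro sum.cong refl) (auto simp: k0_def r0_def)
  also have "\<dots> = cm_term x y i0 j0 $$ r0" using i0(1) j0(1) by (rule sum_delta2)
  finally have "cm x y k0 $$ r0 \<noteq> 0"
    using cm_term_subdegree(1)[of x i0 y j0, OF i0(2) j0(2)] by (simp add: r0_def)
  then show ?thesis by auto
qed

end

section \<open>The Kummer extension L = K(u), u^N = c^(p^(n-s)) xi\<close>

locale kummer_extension = lifting_exponent p s for p s :: nat +
  fixes n :: nat
    and iota :: "'a::field_char_0 \<Rightarrow> 'b::field"
    and \<xi> c :: 'a
    and u :: 'b
  assumes sn: "s \<le> n"
    and xi: "primitive_root_of_unity (p ^ s) \<xi>"
    and c0: "c \<noteq> 0"
    and fh: "field_hom iota"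
    and u_pow: "u ^ (p ^ n) = iota c ^ (p ^ (n - s)) * iota \<xi>"
    and gen: "generated_field (range iota \<union> {u}) = UNIV"
    and deg: "ext_degree_is iota (p ^ n)"
begin

abbreviation N where "N \<equiv> p ^ n"
abbreviation S where "S \<equiv> geom_sum m"

definition rad :: 'a where "rad = c ^ (p ^ (n - s)) * \<xi>"

lemmas io_0 = fh_0[OF fh] and io_1 = fh_1[OF fh] and io_add = fh_add[OF fh]
  and io_mult = fh_mult[OF fh] and io_eq0 = fh_eq0[OF fh] and io_power = fh_power[OF fh]
  and io_inverse = fh_inverse[OF fh] and io_inj = fh_inj[OF fh] and io_diff = fh_diff[OF fh]

lemma N_pos: "0 < N" using p_gt1 by simp

lemma N_gt1: "1 < N"
proof -
  have "p ^ 1 \<le> p ^ n" using s1 sn p_gt1 by (intro power_increasing) auto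
  then show ?thesis using p_gt1 by simp
qed

lemma rad_nz: "rad \<noteq> 0"
proof -
  have "\<xi> \<noteq> 0"
    using xi unfolding primitive_root_of_unity_def by (metis power_0_left zero_neq_one)
  then show ?thesis using c0 by (simp add: rad_def)
qed

lemma u_N: "u ^ N = iota rad"
  using u_pow by (simp add: rad_def io_mult io_power)

lemma u_nz: "u \<noteq> 0"
proof
  assume "u = 0"
  then have "iota rad = 0" using u_N zero_power[OF N_pos] by metis
  then show False using rad_nz io_eq0 by blast
qed

sublocale V: vector_space "\<lambda>a (x::'b). iota a * x"
  by unfold_locales (simp_all add: algebra_simps io_add io_mult io_1)

lemma dim_L: "V.dim UNIV = N"
proof -
  obtain B :: "'b set" where B: "finite B" "card B = N"
    "\<forall>a::'b \<Rightarrow> 'a. (\<Sum>b\<in>B. iota (a b) * b) = 0 \<longrightarrow> (\<forall>b\<in>B. a b = 0)"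
    "\<forall>y. \<exists>a::'b \<Rightarrow> 'a. y = (\<Sum>b\<in>B. iota (a b) * b)"
    using deg unfolding ext_degree_is_def by blast
  have ind: "V.independent B"
    using B(1,3) by (auto simp: V.dependent_finite)
  have "UNIV \<subseteq> V.span B"
  proof
    fix y :: 'b
    obtain a where y: "y = (\<Sum>b\<in>B. iota (a b) * b)" using B(4) by blast
    have "iota (a b) * b \<in> V.span B" if "b \<in> B" for b
      using V.span_scale[OF V.span_base[OF that]] by simp
    then show "y \<in> V.span B" unfolding y by (simp add: V.span_sum)
  qed
  then show ?thesis using V.dim_unique[OF _ _ ind B(2)] by simp
qed

definition ev :: "'b \<Rightarrow> 'a poly \<Rightarrow> 'b" where "ev w P = poly (map_poly iota P) w"

lemma ev_add: "ev w (P + Q) = ev w P + ev w Q" by (simp add: ev_def mp_add[OF fh])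
lemma ev_diff: "ev w (P - Q) = ev w P - ev w Q" by (simp add: ev_def mp_diff[OF fh])
lemma ev_mult: "ev w (P * Q) = ev w P * ev w Q" by (simp add: ev_def mp_mult[OF fh])
lemma ev_const: "ev w [:a:] = iota a" by (simp add: ev_def mp_const[OF fh])
lemma ev_monom: "ev w (monom a k) = iota a * w ^ k" by (simp add: ev_def mp_monom[OF fh] poly_monom)

text \<open>X^N - rad, which turns out to be the minimal polynomial of u.\<close>
definition min_poly :: "'a poly" where "min_poly = monom 1 N - [:rad:]"

lemma min_poly_degree: "degree min_poly = N"
proof -
  have "min_poly = monom 1 N + [:-rad:]" unfolding min_poly_def by simp
  then show ?thesis using N_pos by (simp add: degree_add_eq_left degree_monom_eq)
qed

lemma min_poly_nz: "min_poly \<noteq> 0" using min_poly_degree N_pos by auto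

lemma ev_min_poly: "w ^ N = iota rad \<Longrightarrow> ev w min_poly = 0"
  by (simp add: min_poly_def ev_diff ev_monom ev_const io_1)

lemma ev_mod: "w ^ N = iota rad \<Longrightarrow> ev w (P mod min_poly) = ev w P"
proof -
  assume h: "w ^ N = iota rad"
  have "ev w P = ev w ((P div min_poly) * min_poly + P mod min_poly)" by simp
  also have "\<dots> = ev w (P mod min_poly)" by (simp only: ev_add ev_mult ev_min_poly[OF h]) simp
  finally show ?thesis by simp
qed

lemma degree_mod_min_poly: "degree (P mod min_poly) < N"
  using degree_mod_less[OF min_poly_nz, of P] min_poly_degree N_pos by auto

lemma ev_sum: "degree P < N \<Longrightarrow> ev w P = (\<Sum>i<N. iota (coeff P i) * w ^ i)"
  unfolding ev_def by (rule poly_mp_sum[OF fh])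

lemma ev_range_closed:
  assumes "x \<in> range (ev u)" "y \<in> range (ev u)"
  shows "x + y \<in> range (ev u)" "x * y \<in> range (ev u)" "- x \<in> range (ev u)"
proof -
  obtain P Q where "x = ev u P" "y = ev u Q" using assms by blast
  then have "x + y = ev u (P + Q)" "x * y = ev u (P * Q)" "- x = ev u (- P)"
    using ev_diff[of u 0 P] by (simp_all add: ev_add ev_mult) (simp add: ev_def)
  then show "x + y \<in> range (ev u)" "x * y \<in> range (ev u)" "- x \<in> range (ev u)" by simp_all
qed

lemma iota_in_ev_range: "iota a \<in> range (ev u)"
  using ev_const[of u a, symmetric] by (rule range_eqI)

lemma u_in_ev_range: "u \<in> range (ev u)"
proof (rule range_eqI)
  show "u = ev u (monom 1 1)" by (simp add: ev_monom io_1)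
qed

definition pow_basis :: "'b set" where "pow_basis = (\<lambda>i. u ^ i) ` {..<N}"

lemma ev_range_span: "range (ev u) = V.span pow_basis"
proof
  show "range (ev u) \<subseteq> V.span pow_basis"
  proof
    fix y assume "y \<in> range (ev u)"
    then obtain P where "y = ev u P" by blast
    then have "y = (\<Sum>i<N. iota (coeff (P mod min_poly) i) * u ^ i)"
      using ev_mod[OF u_N] ev_sum[OF degree_mod_min_poly] by simp
    moreover have "iota (coeff (P mod min_poly) i) * u ^ i \<in> V.span pow_basis" if "i < N" for i
      using V.span_scale[OF V.span_base] that by (simp add: pow_basis_def)
    ultimately show "y \<in> V.span pow_basis"
      using V.span_sum[of "{..<N}" "\<lambda>i. iota (coeff (P mod min_poly) i) * u ^ i"] by simp
  qed
next
  have "V.subspace (range (ev u))"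
    unfolding V.subspace_def
    using iota_in_ev_range[of 0] ev_range_closed iota_in_ev_range io_0 by auto
  moreover have "pow_basis \<subseteq> range (ev u)"
  proof -
    have "u ^ i = ev u (monom 1 i)" for i by (simp add: ev_monom io_1)
    then show ?thesis unfolding pow_basis_def by auto
  qed
  ultimately show "V.span pow_basis \<subseteq> range (ev u)" by (rule V.span_minimal[rotated])
qed

text \<open>K[u] is a field: multiplication by y /= 0 is an injective K-linear endomorphism.\<close>
lemma ev_range_inverse:
  assumes y: "y \<in> range (ev u)" and y0: "y \<noteq> 0"
  shows "inverse y \<in> range (ev u)"
proof -
  have "(\<lambda>z. y * z) ` V.span pow_basis = V.span pow_basis"
  proof (rule inj_endo_span_surj[OF V.vector_space_axioms])
    show "finite pow_basis" by (simp add: pow_basis_def)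
    show "(\<lambda>z. y * z) ` V.span pow_basis \<subseteq> V.span pow_basis"
      using ev_range_closed(2)[OF y] ev_range_span by auto
    show "inj_on (\<lambda>z. y * z) (V.span pow_basis)" using y0 by (auto intro: inj_onI)
  qed (simp_all add: algebra_simps)
  moreover have "1 \<in> V.span pow_basis" using ev_range_span iota_in_ev_range[of 1] io_1 by simp
  ultimately obtain z where "z \<in> V.span pow_basis" "y * z = 1" by (metis imageE)
  then have "inverse y = z" by (simp add: inverse_unique)
  then show ?thesis using \<open>z \<in> V.span pow_basis\<close> ev_range_span by simp
qed

lemma ev_surj: "\<exists>P. y = ev u P"
proof -
  have "is_subfield (range (ev u))"
    unfolding is_subfield_def
    using ev_range_closed ev_range_inverse iota_in_ev_range[of 0] iota_in_ev_range[of 1] io_0 io_1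
    by auto
  moreover have "range iota \<union> {u} \<subseteq> range (ev u)"
    using iota_in_ev_range u_in_ev_range by auto
  ultimately have "generated_field (range iota \<union> {u}) \<subseteq> range (ev u)"
    unfolding generated_field_def by blast
  then show ?thesis using gen by auto
qed

lemma pow_basis_span: "V.span pow_basis = UNIV"
  using ev_range_span ev_surj by (metis UNIV_eq_I rangeI)

text \<open>N vectors spanning an N-dimensional space are a basis.\<close>
lemma pow_basis_indep: "V.independent pow_basis" and card_pow_basis: "card pow_basis = N"
proof -
  have fin: "finite pow_basis" by (simp add: pow_basis_def)
  have le: "card pow_basis \<le> N" unfolding pow_basis_def using card_image_le[of "{..<N}"] by simp
  have ge: "N \<le> card pow_basis"
    using V.dim_le_card[of UNIV pow_basis] pow_basis_span fin dim_L by simp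
  then show "card pow_basis = N" using le by simp
  show "V.independent pow_basis"
  proof
    assume "V.dependent pow_basis"
    then obtain a where a: "a \<in> pow_basis" "a \<in> V.span (pow_basis - {a})"
      using V.dependent_def by blast
    then have "V.span (pow_basis - {a}) = UNIV"
      using pow_basis_span by (metis V.span_redundant insert_Diff)
    then have "N \<le> card (pow_basis - {a})"
      using V.dim_le_card[of UNIV "pow_basis - {a}"] fin dim_L by simp
    then show False using card_Diff1_less[OF fin a(1)] le by simp
  qed
qed

lemma inj_u_power: "inj_on (\<lambda>i. u ^ i) {..<N}"
  using card_pow_basis unfolding pow_basis_def by (simp add: inj_on_iff_eq_card)

lemma coord_zero:
  assumes "(\<Sum>i<N. iota (a i) * u ^ i) = 0" "i < N"
  shows "a i = 0"
proof -
  define g where "g = the_inv_into {..<N} (\<lambda>i. u ^ i)"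
  have "(\<Sum>v\<in>pow_basis. iota (a (g v)) * v) = (\<Sum>i<N. iota (a (g (u ^ i))) * u ^ i)"
    unfolding pow_basis_def by (simp add: sum.reindex[OF inj_u_power])
  also have "\<dots> = 0"
    using assms(1) by (simp add: g_def the_inv_into_f_f[OF inj_u_power])
  finally have "\<forall>v\<in>pow_basis. a (g v) = 0"
    using pow_basis_indep by (auto simp: V.dependent_finite pow_basis_def)
  then show ?thesis
    using assms(2) by (simp add: pow_basis_def g_def the_inv_into_f_f[OF inj_u_power])
qed

lemma coord_exists: "\<exists>a. y = (\<Sum>i<N. iota (a i) * u ^ i)"
proof -
  obtain P where "y = ev u P" using ev_surj by blast
  then have "y = (\<Sum>i<N. iota (coeff (P mod min_poly) i) * u ^ i)"
    using ev_mod[OF u_N] ev_sum[OF degree_mod_min_poly] by simp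
  then show ?thesis by blast
qed

text \<open>Consequently X^N - rad divides every polynomial vanishing at u, so any other root w
  of X^N - rad gives a well-defined map K[u] -> L, P(u) |-> P(w).\<close>
lemma ev_eq_transfer:
  assumes "ev u P = ev u Q" "w ^ N = iota rad"
  shows "ev w P = ev w Q"
proof -
  have "(\<Sum>i<N. iota (coeff ((P - Q) mod min_poly) i) * u ^ i) = 0"
    using ev_sum[OF degree_mod_min_poly] ev_mod[OF u_N] assms(1) ev_diff by simp
  then have "\<forall>i<N. coeff ((P - Q) mod min_poly) i = 0" using coord_zero by blast
  then have "(P - Q) mod min_poly = 0"
    using degree_mod_min_poly by (metis coeff_eq_0 leading_coeff_0_iff not_less)
  then obtain R where "P - Q = min_poly * R" by (auto simp: mod_eq_0_iff_dvd elim: dvdE)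
  then have "ev w (P - Q) = 0" using ev_mult ev_min_poly[OF assms(2)] by simp
  then show ?thesis by (simp add: ev_diff)
qed

lemma hom_ev:
  assumes "field_hom g" "\<And>a. g (iota a) = iota a"
  shows "g (ev u P) = ev (g u) P"
proof -
  have "g \<circ> iota = iota" using assms(2) by auto
  then show ?thesis unfolding ev_def using poly_mp_hom[OF fh assms(1)] by simp
qed

lemma hom_ext:
  assumes "field_hom g" "\<And>a. g (iota a) = iota a" "field_hom h" "\<And>a. h (iota a) = iota a"
    and "g u = h u"
  shows "g = h"
proof
  fix y obtain P where "y = ev u P" using ev_surj by blast
  then show "g y = h y" using hom_ev[OF assms(1,2)] hom_ev[OF assms(3,4)] assms(5) by simp
qed

definition zeta :: 'b where "zeta = inverse (iota c) * u ^ (p ^ s)"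

lemma iota_c_nz: "iota c \<noteq> 0" using c0 io_eq0 by simp

lemma zeta_N: "zeta ^ N = 1"
proof -
  have "p ^ (n - s) * p ^ s = N" using sn by (simp add: power_add[symmetric])
  moreover have "\<xi> ^ (p ^ s) = 1" using xi by (simp add: primitive_root_of_unity_def)
  moreover have "iota rad ^ (p ^ s) = iota c ^ (p ^ (n - s) * p ^ s) * iota (\<xi> ^ (p ^ s))"
    by (simp add: rad_def io_mult io_power power_mult power_mult_distrib)
  ultimately have rad_ps: "iota rad ^ (p ^ s) = iota c ^ N" using io_1 by simp
  have "zeta ^ N = inverse (iota c) ^ N * (u ^ N) ^ (p ^ s)"
    by (simp add: zeta_def power_mult_distrib power_mult[symmetric] mult.commute)
  also have "\<dots> = 1" using u_N rad_ps iota_c_nz by (simp add: power_inverse)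
  finally show ?thesis .
qed

lemma zeta_power_pn1: "zeta ^ (p ^ (n - 1)) = iota (\<xi> ^ (p ^ (s - 1)))"
proof -
  have e1: "p ^ s * p ^ (n - 1) = p ^ (s - 1) * N"
    using s1 sn by (simp add: power_add[symmetric])
  have e2: "p ^ (n - s) * p ^ (s - 1) = p ^ (n - 1)"
    using s1 sn by (simp add: power_add[symmetric])
  have "zeta ^ (p ^ (n - 1)) = inverse (iota c) ^ (p ^ (n - 1)) * u ^ (p ^ s * p ^ (n - 1))"
    by (simp add: zeta_def power_mult_distrib power_mult[symmetric])
  also have "u ^ (p ^ s * p ^ (n - 1)) = iota rad ^ (p ^ (s - 1))"
    by (simp only: e1 mult.commute[of "p ^ (s - 1)"] power_mult u_N)
  also have "iota rad ^ (p ^ (s - 1)) = iota c ^ (p ^ (n - 1)) * iota (\<xi> ^ (p ^ (s - 1)))"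
    unfolding e2[symmetric] by (simp add: rad_def io_mult io_power power_mult power_mult_distrib)
  finally show ?thesis using iota_c_nz by (simp add: power_inverse)
qed

lemma zeta_order: "zeta ^ k = 1 \<Longrightarrow> N dvd k"
proof -
  assume h: "zeta ^ k = 1"
  have g: "zeta ^ gcd k N = 1" using power_gcd_eq_1[OF h zeta_N] .
  obtain i where i: "i \<le> n" "gcd k N = p ^ i" using divides_primepow_nat[OF p] gcd_dvd2 by blast
  show "N dvd k"
  proof (cases "i = n")
    case True then show ?thesis using i by (metis gcd_dvd1)
  next
    case False
    then have "p ^ i dvd p ^ (n - 1)" using i by (intro le_imp_power_dvd) auto
    then have "zeta ^ (p ^ (n - 1)) = 1" using g i by (auto simp: power_mult elim: dvdE)
    then have "\<xi> ^ (p ^ (s - 1)) = 1" using zeta_power_pn1 io_inj io_1 by (metis injD)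
    moreover have "0 < p ^ (s - 1)" "p ^ (s - 1) < p ^ s" using p_gt1 s1
      by (auto intro: power_strict_increasing)
    ultimately show ?thesis using xi unfolding primitive_root_of_unity_def by blast
  qed
qed

text \<open>sigma(P(u)) = P(zeta u); well defined since zeta u is another root of X^N - rad.\<close>
definition sig :: "'b \<Rightarrow> 'b" where "sig y = ev (zeta * u) (SOME P. y = ev u P)"

lemma sig_ev: "sig (ev u P) = ev (zeta * u) P"
proof -
  have "ev u P = ev u (SOME Q. ev u P = ev u Q)" by (rule someI_ex) blast
  moreover have "(zeta * u) ^ N = iota rad" using zeta_N u_N by (simp add: power_mult_distrib)
  ultimately show ?thesis unfolding sig_def using ev_eq_transfer by metis
qed

lemma sig_fh: "field_hom sig"
  unfolding field_hom_def
proof (intro conjI allI)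
  show "sig 1 = 1" using sig_ev[of "[:1:]"] by (simp add: ev_const io_1)
  fix x y
  obtain P Q where "x = ev u P" "y = ev u Q" using ev_surj by blast
  then show "sig (x + y) = sig x + sig y" "sig (x * y) = sig x * sig y"
    by (simp_all add: ev_add[symmetric] ev_mult[symmetric] sig_ev)
qed

lemma sig_iota: "sig (iota a) = iota a"
  using sig_ev[of "[:a:]"] by (simp add: ev_const)

lemma sig_u: "sig u = zeta * u"
  using sig_ev[of "monom 1 1"] by (simp add: ev_monom io_1)

lemma sig_u_formula: "sig u = inverse (iota c) * u ^ (p ^ s + 1)"
  by (simp add: sig_u zeta_def)

lemma sigp_fh: "field_hom (sig ^^ r)" using field_hom_funpow[OF sig_fh] .

lemma sigp_iota: "(sig ^^ r) (iota a) = iota a"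
  by (induction r) (simp_all add: sig_iota)

lemma sig_zeta: "sig zeta = zeta ^ m"
proof -
  have "sig zeta = inverse (iota c) * (zeta * u) ^ (p ^ s)"
    using sig_iota[of c] sig_u fh_mult[OF sig_fh] fh_power[OF sig_fh] fh_inverse[OF sig_fh]
    by (simp add: zeta_def)
  also have "\<dots> = zeta ^ (p ^ s) * zeta" by (simp add: zeta_def power_mult_distrib)
  finally show ?thesis by simp
qed

lemma sigp_u: "(sig ^^ r) u = zeta ^ (S r) * u"
proof (induction r)
  case (Suc r)
  have "(sig ^^ Suc r) u = (zeta ^ m) ^ (S r) * (zeta * u)"
    using Suc fh_mult[OF sig_fh] fh_power[OF sig_fh] sig_zeta sig_u by simp
  also have "\<dots> = zeta ^ (1 + m * S r) * u"
    by (simp only: power_add power_mult power_one_right mult_ac)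
  also have "1 + m * S r = S (1 + r)"
    by (simp only: geom_sum_add power_one_right geom_sum_1)
  also have "1 + r = Suc r" by simp
  finally show ?case .
qed (simp add: geom_sum_def)

lemma sigp_u_inj:
  assumes "r < N" "r' < N" "(sig ^^ r) u = (sig ^^ r') u"
  shows "r = r'"
proof -
  have neq: False if "r < r'" "r' < N" "(sig ^^ r) u = (sig ^^ r') u" for r r'
  proof -
    define d where "d = r' - r"
    define A where "A = zeta ^ (S r)"
    define B where "B = zeta ^ (m ^ r * S d)"
    have "r' = r + d" using that(1) by (simp add: d_def)
    then have "A * u = A * B * u"
      using that(3) by (simp only: sigp_u A_def B_def geom_sum_add power_add)
    moreover have "A \<noteq> 0" using zeta_N N_pos by (metis A_def power_not_zero zero_neq_one zero_power)
    ultimately have "zeta ^ (m ^ r * S d) = 1" using u_nz by (simp add: B_def)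
    then have "N dvd m ^ r * S d" by (rule zeta_order)
    then have "N dvd S d" using coprime_ppow_m_power coprime_dvd_mult_right_iff by blast
    moreover have "0 < d" "d < N" using that by (auto simp: d_def)
    ultimately show False using ppow_not_dvd_geom_sum by blast
  qed
  show ?thesis using assms neq[of r r'] neq[of r' r] by (metis linorder_neqE_nat)
qed

lemma sigp_N: "sig ^^ N = id"
proof (rule hom_ext[OF sigp_fh sigp_iota field_hom_id])
  obtain k where "S N = N * k" using ppow_dvd_geom_sum by (auto elim: dvdE)
  then show "(sig ^^ N) u = id u" using zeta_N by (simp add: sigp_u power_mult)
qed simp

lemma sigp_bij: "bij (sig ^^ r)"
proof (rule bijI)
  show "inj (sig ^^ r)" using fh_inj[OF sigp_fh] .
  have "(sig ^^ r) ((sig ^^ (N * r - r)) y) = y" for y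
  proof -
    have "1 \<le> N" using N_pos by linarith
    then have "1 * r \<le> N * r" by (rule mult_le_mono1)
    then have "r + (N * r - r) = N * r" by simp
    then have "(sig ^^ r) ((sig ^^ (N * r - r)) y) = ((sig ^^ N) ^^ r) y"
      by (metis funpow_add funpow_mult o_apply mult.commute)
    then show ?thesis by (simp add: sigp_N)
  qed
  then show "surj (sig ^^ r)" by (metis surjI)
qed

lemma sigp_aut: "galois_aut iota (sig ^^ r)"
  unfolding galois_aut_def using sigp_bij sigp_fh sigp_iota by blast

lemma sig_aut: "galois_aut iota sig"
  using sigp_aut[of 1] by simp

definition conjugates :: "'b set" where "conjugates = (\<lambda>r. (sig ^^ r) u) ` {..<N}"

lemma sigp_u_N: "((sig ^^ r) u) ^ N = iota rad"
  using fh_power[OF sigp_fh, of r u N] u_N sigp_iota by simp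

lemma card_conjugates: "card conjugates = N"
  unfolding conjugates_def using sigp_u_inj by (simp add: card_image inj_on_def)

lemma roots_are_conjugates:
  assumes "x ^ N = iota rad"
  shows "x \<in> conjugates"
proof -
  define Q :: "'b poly" where "Q = monom 1 N - [:iota rad:]"
  have Q: "Q = monom 1 N + [:- iota rad:]" by (simp add: Q_def)
  then have degQ: "degree Q = N" using N_pos by (simp add: degree_add_eq_left degree_monom_eq)
  then have Q0: "Q \<noteq> 0" using N_pos by auto
  have root: "poly Q y = 0 \<longleftrightarrow> y ^ N = iota rad" for y by (simp add: Q_def poly_monom)
  have fin: "finite {y. poly Q y = 0}" using poly_roots_finite[OF Q0] .
  have sub: "conjugates \<subseteq> {y. poly Q y = 0}"
    unfolding conjugates_def root using sigp_u_N by auto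
  have "card {y. poly Q y = 0} \<le> N" using card_poly_roots_bound[OF Q0] degQ by simp
  then have "conjugates = {y. poly Q y = 0}"
    using card_subset_eq[OF fin sub] card_mono[OF fin sub] card_conjugates by linarith
  then show ?thesis using assms root by blast
qed

lemma galois_group_eq: "galois_group iota = {sig ^^ i | i. i < N}"
proof
  show "{sig ^^ i | i. i < N} \<subseteq> galois_group iota"
    using sigp_aut by (auto simp: galois_group_def)
  show "galois_group iota \<subseteq> {sig ^^ i | i. i < N}"
  proof
    fix g assume "g \<in> galois_group iota"
    then have g: "field_hom g" "\<And>a. g (iota a) = iota a"
      by (auto simp: galois_group_def galois_aut_def)
    have "g u ^ N = iota rad" using fh_power[OF g(1), of u N] u_N g(2) by simp
    then obtain i where "i < N" "g u = (sig ^^ i) u"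
      using roots_are_conjugates unfolding conjugates_def by auto
    then show "g \<in> {sig ^^ i | i. i < N}" using hom_ext[OF g sigp_fh sigp_iota] by blast
  qed
qed

lemma card_galois: "card (galois_group iota) = N"
proof -
  have "inj_on (\<lambda>i. sig ^^ i) {..<N}"
    using sigp_u_inj by (auto intro!: inj_onI)
  moreover have "{sig ^^ i | i. i < N} = (\<lambda>i. sig ^^ i) ` {..<N}" by auto
  ultimately show ?thesis using galois_group_eq by (simp add: card_image)
qed

text \<open>The fixed field of sigma is K: a fixed y = P(u) with deg P < N makes P - y vanish at all N
  conjugates of u, so P is the constant y.\<close>
lemma sig_fixed_in_K:
  assumes "sig y = y"
  shows "\<exists>a. y = iota a"
proof -
  obtain P0 where "y = ev u P0" using ev_surj by blast
  define P where "P = P0 mod min_poly"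
  have y: "y = ev u P" using ev_mod[OF u_N] \<open>y = ev u P0\<close> by (simp add: P_def)
  have fix_all: "(sig ^^ r) y = y" for r by (induction r) (simp_all add: assms)
  define Z where "Z = map_poly iota P - [:y:]"
  have degZ: "degree Z < N"
    unfolding Z_def using degree_mod_min_poly mp_degree[OF fh] N_pos
    by (intro degree_diff_less) (auto simp: P_def)
  have roots: "conjugates \<subseteq> {x. poly Z x = 0}"
  proof
    fix x assume "x \<in> conjugates"
    then obtain r where x: "x = (sig ^^ r) u" unfolding conjugates_def by auto
    have "(sig ^^ r) y = ev x P" using hom_ev[OF sigp_fh sigp_iota] y x by simp
    then show "x \<in> {x. poly Z x = 0}" using fix_all by (simp add: Z_def ev_def)
  qed
  have "Z = 0"
  proof (rule ccontr)
    assume "Z \<noteq> 0"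
    then have "card conjugates \<le> degree Z"
      using roots poly_roots_finite card_mono card_poly_roots_bound le_trans by metis
    then show False using card_conjugates degZ by simp
  qed
  then have "map_poly iota P = [:y:]" unfolding Z_def by simp
  then have "coeff (map_poly iota P) 0 = y" by simp
  then have "iota (coeff P 0) = y" by (simp add: mp_coeff[OF fh])
  then show ?thesis by blast
qed

lemma sigp_u_formula: "(sig ^^ b) u = iota (inverse c ^ S b) * u ^ (m ^ b)"
proof -
  have "(sig ^^ b) u = inverse (iota c) ^ S b * u ^ (p ^ s * S b + 1)"
    by (simp add: sigp_u zeta_def power_mult_distrib power_mult)
  also have "p ^ s * S b + 1 = m ^ b" using m_power_eq[of b] by simp
  finally show ?thesis by (simp add: io_power io_inverse)
qed

section \<open>The cyclic algebra D = (L((t))/k, sigma, t)\<close>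

sublocale D: cyclic_algebra N sig
  using N_pos sig_fh sigp_N by unfold_locales

abbreviation scl :: "'a fls \<Rightarrow> (nat \<Rightarrow> 'b fls) \<Rightarrow> (nat \<Rightarrow> 'b fls)" where
  "scl \<equiv> cyc_smult iota"

lemma scl_apply: "scl a x k = fls_cmap iota a * x k" by (simp add: cyc_smult_def)

text \<open>Scalars from k = K((t)) are fixed by sigma, hence central.\<close>
lemma twist_scalar: "D.twist i (fls_cmap iota a) = fls_cmap iota a"
proof -
  have "D.twist i (fls_cmap iota a) = fls_cmap ((sig ^^ i) \<circ> iota) a"
    by (simp add: cmap_comp fh_0[OF sigp_fh] io_0)
  also have "(sig ^^ i) \<circ> iota = iota" by (rule ext) (simp add: sigp_iota)
  finally show ?thesis .
qed

lemma cm_scl_left: "D.cm (scl a x) y = scl a (D.cm x y)"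
  unfolding cyc_smult_def by (rule D.cm_scal_left)

lemma cm_scl_right: "D.cm x (scl a y) = scl a (D.cm x y)"
  unfolding cyc_smult_def by (rule D.cm_scal_right) (rule twist_scalar)

lemma scl_scl: "scl a (scl b x) = scl (a * b) x"
  by (rule ext) (simp add: scl_apply cmap_mult[OF fh] mult_ac)

lemma scl_vector_space: "vector_space scl"
proof unfold_locales
  fix a b :: "'a fls" and x y :: "nat \<Rightarrow> 'b fls"
  show "scl a (x + y) = scl a x + scl a y" by (rule ext) (simp add: scl_apply distrib_left)
  show "scl (a + b) x = scl a x + scl b x"
    by (rule ext) (simp add: scl_apply cmap_add[OF fh] distrib_right)
  show "scl a (scl b x) = scl (a * b) x" by (rule scl_scl)
  show "scl 1 x = x" by (rule ext) (simp add: scl_apply cmap_1[OF fh])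
qed

lemma scl_cancel:
  assumes "scl a x = scl b x" "x k \<noteq> 0"
  shows "a = b"
proof -
  have "fls_cmap iota a * x k = fls_cmap iota b * x k"
    using fun_cong[OF assms(1), of k] by (simp add: scl_apply)
  then show ?thesis using assms(2) cmap_inj[OF fh] by (simp add: inj_eq)
qed

abbreviation GM where "GM \<equiv> G_mult N m"

definition basis_elt :: "nat \<times> nat \<Rightarrow> (nat \<Rightarrow> 'b fls)" where
  "basis_elt g = cyc_mono (snd g) (fls_const (u ^ fst g))"

text \<open>(u^a v^b)(u^a' v^b') = u^a sigma^b(u)^a' v^(b+b') = f u^(a + a' m^b) v^(b+b'), where f
  collects the factor c^(-S(b) a') from sigma^b(u)^a' and the powers of rad = u^N and of t = v^N
  split off when the exponents are reduced modulo N.\<close>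
definition cocycle :: "nat \<times> nat \<Rightarrow> nat \<times> nat \<Rightarrow> 'a fls" where
  "cocycle g h = fls_X ^ ((snd g + snd h) div N) *
     fls_const (inverse c ^ (S (snd g) * fst h) * rad ^ ((fst g + fst h * m ^ snd g) div N))"

lemma G_closed: "G_mult N k g h \<in> G_carrier N"
  using N_pos by (simp add: G_mult_def G_carrier_def)

lemma finite_G: "finite (G_carrier N)" by (simp add: G_carrier_def)

lemma basis_elt_carrier: "basis_elt g \<in> cyc_carrier N" if "g \<in> G_carrier N"
  using that by (auto simp: basis_elt_def cyc_mono_def cyc_carrier_def G_carrier_def)

lemma basis_elt_nz: "basis_elt g (snd g) \<noteq> 0"
  using u_nz by (simp add: basis_elt_def cyc_mono_def)

lemma cocycle_nz: "cocycle g h \<noteq> 0"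
  using c0 rad_nz by (simp add: cocycle_def fls_X_pow_nonzero)

lemma u_power_reduce: "u ^ e = iota (rad ^ (e div N)) * u ^ (e mod N)"
proof -
  have "u ^ e = u ^ (N * (e div N) + e mod N)" by simp
  also have "\<dots> = (u ^ N) ^ (e div N) * u ^ (e mod N)" by (simp only: power_add power_mult)
  finally show ?thesis by (simp add: u_N io_power)
qed

lemma basis_elt_mult:
  assumes "g \<in> G_carrier N" "h \<in> G_carrier N"
  shows "D.cm (basis_elt g) (basis_elt h) = scl (cocycle g h) (basis_elt (GM g h))"
proof -
  obtain a b where g: "g = (a, b)" "b < N" using assms(1) by (cases g) (auto simp: G_carrier_def)
  obtain c' d where h: "h = (c', d)" "d < N" using assms(2) by (cases h) (auto simp: G_carrier_def)
  define e where "e = a + c' * m ^ b"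
  have key: "u ^ a * ((sig ^^ b) u) ^ c'
      = iota (inverse c ^ (S b * c') * rad ^ (e div N)) * u ^ (e mod N)"
  proof -
    have "u ^ a * ((sig ^^ b) u) ^ c' = iota (inverse c ^ (S b * c')) * u ^ e"
      by (simp add: sigp_u_formula power_mult_distrib power_mult[symmetric] power_add io_power
          e_def mult_ac)
    also have "\<dots> = iota (inverse c ^ (S b * c') * rad ^ (e div N)) * u ^ (e mod N)"
      by (subst u_power_reduce) (simp add: io_mult mult_ac)
    finally show ?thesis .
  qed
  have "D.cm (basis_elt g) (basis_elt h) = cyc_mono ((b + d) mod N)
      (fls_X ^ ((b + d) div N) * fls_const (u ^ a) * fls_const (((sig ^^ b) u) ^ c'))"
    unfolding basis_elt_def g(1) h(1) fst_conv snd_conv D.cm_mono[OF g(2) h(2)]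
    by (simp add: cmap_const[OF sigp_fh] fh_power[OF sigp_fh])
  also have "\<dots> = cyc_mono ((b + d) mod N) (fls_X ^ ((b + d) div N)
      * fls_const (iota (inverse c ^ (S b * c') * rad ^ (e div N))) * fls_const (u ^ (e mod N)))"
    by (simp only: mult.assoc fls_const_mult_const key)
  also have "\<dots> = scl (cocycle g h) (basis_elt (GM g h))"
    unfolding cyc_smult_def cocycle_def basis_elt_def G_mult_def g(1) h(1) fst_conv snd_conv
      cyc_mono_def cmap_mult[OF fh] cmap_power[OF fh] cmap_X[OF fh] cmap_const[OF fh] e_def
    by (rule ext) (simp only: mult_zero_right if_distrib[of "\<lambda>x. _ * x"])
  finally show ?thesis .
qed

text \<open>The multiplication of G is associative (m^b mod N depends only on b mod N).\<close>
lemma G_assoc: "GM (GM g h) l = GM g (GM h l)"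
proof -
  obtain a b where g: "g = (a, b)" by (cases g)
  obtain c' d where h: "h = (c', d)" by (cases h)
  obtain e f where l: "l = (e, f)" by (cases l)
  have A: "((a + c' * m ^ b) mod N + e * m ^ ((b + d) mod N)) mod N
      = (a + c' * m ^ b + e * m ^ (b + d)) mod N"
  proof -
    have "((a + c' * m ^ b) mod N + e * m ^ ((b + d) mod N)) mod N
        = (a + c' * m ^ b + (e * (m ^ ((b + d) mod N) mod N)) mod N) mod N"
      by (simp add: mod_add_left_eq mod_add_right_eq mod_mult_right_eq)
    also have "m ^ ((b + d) mod N) mod N = m ^ (b + d) mod N"
      by (rule m_power_mod_reduce)
    finally show ?thesis by (simp add: mod_add_right_eq mod_mult_right_eq)
  qed
  have B: "(a + ((c' + e * m ^ d) mod N) * m ^ b) mod N = (a + c' * m ^ b + e * m ^ (b + d)) mod N"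
  proof -
    have "(a + ((c' + e * m ^ d) mod N) * m ^ b) mod N
        = (a + (((c' + e * m ^ d) mod N) * m ^ b) mod N) mod N"
      by (simp add: mod_add_right_eq)
    also have "(((c' + e * m ^ d) mod N) * m ^ b) mod N = ((c' + e * m ^ d) * m ^ b) mod N"
      by (simp add: mod_mult_left_eq)
    also have "(a + ((c' + e * m ^ d) * m ^ b) mod N) mod N = (a + (c' + e * m ^ d) * m ^ b) mod N"
      by (simp add: mod_add_right_eq)
    also have "a + (c' + e * m ^ d) * m ^ b = a + c' * m ^ b + e * m ^ (b + d)"
      by (simp add: algebra_simps power_add)
    finally show ?thesis .
  qed
  have C: "((b + d) mod N + f) mod N = (b + (d + f) mod N) mod N"
    by (simp add: mod_add_left_eq mod_add_right_eq add.assoc)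
  show ?thesis unfolding g h l G_mult_def fst_conv snd_conv using A B C by simp
qed

text \<open>Associativity of D forces the cocycle identity.\<close>
lemma two_cocycle: "two_cocycle N m cocycle"
  unfolding two_cocycle_def
proof (intro conjI ballI)
  fix g h l assume gh: "g \<in> G_carrier N" "h \<in> G_carrier N" "l \<in> G_carrier N"
  have "D.cm (D.cm (basis_elt g) (basis_elt h)) (basis_elt l)
      = scl (cocycle g h * cocycle (GM g h) l) (basis_elt (GM (GM g h) l))"
    by (simp only: basis_elt_mult gh G_closed cm_scl_left scl_scl)
  moreover have "D.cm (basis_elt g) (D.cm (basis_elt h) (basis_elt l))
      = scl (cocycle h l * cocycle g (GM h l)) (basis_elt (GM g (GM h l)))"
    by (simp only: basis_elt_mult gh G_closed cm_scl_right scl_scl)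
  moreover have "D.cm (D.cm (basis_elt g) (basis_elt h)) (basis_elt l)
      = D.cm (basis_elt g) (D.cm (basis_elt h) (basis_elt l))"
    by (rule D.cm_assoc) (simp_all add: basis_elt_carrier gh)
  ultimately have "scl (cocycle g h * cocycle (GM g h) l) (basis_elt (GM g (GM h l)))
      = scl (cocycle h l * cocycle g (GM h l)) (basis_elt (GM g (GM h l)))"
    by (simp only: G_assoc)
  then show "cocycle g h * cocycle (GM g h) l = cocycle h l * cocycle g (GM h l)"
    by (rule scl_cancel) (rule basis_elt_nz)
qed (rule cocycle_nz)

definition Phi :: "(nat \<times> nat \<Rightarrow> 'a fls) \<Rightarrow> (nat \<Rightarrow> 'b fls)" where
  "Phi x = (\<Sum>g\<in>G_carrier N. scl (x g) (basis_elt g))"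

lemma Phi_apply: "Phi x k = (\<Sum>g\<in>G_carrier N. fls_cmap iota (x g) * basis_elt g k)"
  by (simp add: Phi_def sum_fun_apply scl_apply)

lemma Phi_add: "Phi (\<lambda>g. x g + y g) = (\<lambda>i. Phi x i + Phi y i)"
  by (rule ext) (simp add: Phi_apply cmap_add[OF fh] distrib_right sum.distrib)

lemma Phi_smult: "Phi (\<lambda>g. a * x g) = scl a (Phi x)"
  by (rule ext) (simp only: Phi_apply cyc_smult_def cmap_mult[OF fh] sum_distrib_left mult.assoc)

lemma Phi_basis:
  assumes "g0 \<in> G_carrier N"
  shows "Phi (tga_basis g0) = basis_elt g0"
proof (rule ext)
  fix k
  have "Phi (tga_basis g0) k = (\<Sum>g\<in>G_carrier N. if g0 = g then basis_elt g k else 0)"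
    unfolding Phi_apply tga_basis_def
    by (intro sum.cong refl) (auto simp: cmap_1[OF fh] cmap_0[OF fh])
  then show "Phi (tga_basis g0) k = basis_elt g0 k" using assms finite_G by simp
qed

lemma Phi_pi: "Phi (tga_basis G_pi) = cyc_elem_L u"
proof -
  have "G_pi \<in> G_carrier N" using N_gt1 p_gt1 by (simp add: G_pi_def G_carrier_def)
  then show ?thesis by (simp add: Phi_basis basis_elt_def G_pi_def cyc_elem_L_def cyc_mono_def)
qed

lemma Phi_sigma: "Phi (tga_basis G_sigma) = cyc_v"
proof -
  have "G_sigma \<in> G_carrier N" using N_gt1 p_gt1 by (simp add: G_sigma_def G_carrier_def)
  then show ?thesis
    by (simp add: Phi_basis basis_elt_def G_sigma_def cyc_v_def cyc_mono_def fun_eq_iff)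
qed

lemma Phi_mult: "Phi (tga_mult N m cocycle x y) = D.cm (Phi x) (Phi y)"
proof (rule ext)
  fix k
  have "Phi (tga_mult N m cocycle x y) k = (\<Sum>g\<in>G_carrier N. \<Sum>h\<in>G_carrier N. \<Sum>l\<in>G_carrier N.
      if GM h l = g then fls_cmap iota (x h * y l * cocycle h l) * basis_elt g k else 0)"
  proof -
    have "fls_cmap iota (if P then v else 0) * w = (if P then fls_cmap iota v * w else 0)"
      for P v w by (simp add: cmap_0[OF fh])
    then show ?thesis unfolding Phi_apply tga_mult_def
      by (intro sum.cong refl) (simp only: cmap_sum[OF fh] sum_distrib_right if_True)
  qed
  also have "\<dots> = (\<Sum>h\<in>G_carrier N. \<Sum>l\<in>G_carrier N. \<Sum>g\<in>G_carrier N.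
      if GM h l = g then fls_cmap iota (x h * y l * cocycle h l) * basis_elt g k else 0)"
    by (subst sum.swap) (rule sum.cong[OF refl], rule sum.swap)
  also have "\<dots> = (\<Sum>h\<in>G_carrier N. \<Sum>l\<in>G_carrier N.
      fls_cmap iota (x h * y l * cocycle h l) * basis_elt (GM h l) k)"
    by (intro sum.cong refl) (simp add: sum.delta finite_G G_closed)
  also have "\<dots> = D.cm (Phi x) (Phi y) k"
    unfolding Phi_def D.cm_sum_left unfolding D.cm_sum_right
    by (simp add: cm_scl_left cm_scl_right basis_elt_mult scl_scl sum_fun_apply scl_apply mult_ac)
  finally show "Phi (tga_mult N m cocycle x y) k = D.cm (Phi x) (Phi y) k" .
qed

lemma Phi_carrier: "Phi x \<in> cyc_carrier N"
  by (auto simp: cyc_carrier_def Phi_apply basis_elt_def cyc_mono_def G_carrier_def intro!: sum.neutral)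

lemma Phi_nth:
  assumes "b < N"
  shows "Phi x b $$ j = (\<Sum>a<N. iota (x (a, b) $$ j) * u ^ a)"
proof -
  have "Phi x b = (\<Sum>a<N. \<Sum>b'<N. fls_cmap iota (x (a, b')) * basis_elt (a, b') b)"
    unfolding Phi_apply G_carrier_def lessThan_atLeast0 by (simp add: sum.cartesian_product)
  also have "\<dots> = (\<Sum>a<N. fls_cmap iota (x (a, b)) * fls_const (u ^ a))"
    using assms by (simp add: basis_elt_def cyc_mono_def if_distrib[of "\<lambda>F. _ * F"] sum.delta'
        cong: if_cong)
  finally show ?thesis by (simp add: fls_nth_sum cmap_nth[OF fh])
qed

lemma Phi_inj:
  assumes "x \<in> tga_carrier N" "y \<in> tga_carrier N" "Phi x = Phi y"
  shows "x = y"
proof (rule ext)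
  fix g
  show "x g = y g"
  proof (cases "g \<in> G_carrier N")
    case False
    then have "x g = 0" "y g = 0" using assms(1,2) unfolding tga_carrier_def by blast+
    then show ?thesis by simp
  next
    case True
    then obtain a b where g: "g = (a, b)" "a < N" "b < N" by (cases g) (auto simp: G_carrier_def)
    have "x (a, b) $$ j - y (a, b) $$ j = 0" for j
    proof (rule coord_zero[OF _ g(2)])
      show "(\<Sum>a<N. iota (x (a, b) $$ j - y (a, b) $$ j) * u ^ a) = 0"
        using Phi_nth[OF g(3), of x j] Phi_nth[OF g(3), of y j] assms(3)
        by (simp add: io_diff left_diff_distrib sum_subtractf)
    qed
    then show ?thesis using g(1) by (simp add: fls_eq_iff)
  qed
qed

text \<open>Phi is onto: expand every coefficient of every component in the power basis.\<close>
lemma Phi_surj: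
  assumes z: "z \<in> cyc_carrier N"
  shows "\<exists>x\<in>tga_carrier N. Phi x = z"
proof -
  define al where "al b j = (if z b $$ j = 0 then (\<lambda>_. 0)
      else SOME a. z b $$ j = (\<Sum>i<N. iota (a i) * u ^ i))" for b j
  have al: "z b $$ j = (\<Sum>a<N. iota (al b j a) * u ^ a)" for b j
    using someI_ex[OF coord_exists[of "z b $$ j"]] by (simp add: al_def io_0)
  define x where "x g = (if g \<in> G_carrier N then Abs_fls (\<lambda>j. al (snd g) j (fst g)) else 0)" for g
  have xnth: "x (a, b) $$ j = al b j a" if "a < N" "b < N" for a b j
  proof -
    have "\<forall>k < fls_subdegree (z b). al b k a = 0" by (simp add: al_def)
    then show ?thesis using that by (simp add: x_def G_carrier_def nth_Abs_fls_lower_bound)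
  qed
  have "Phi x b = z b" for b
  proof (cases "b < N")
    case True
    show ?thesis by (rule fls_eqI) (simp add: Phi_nth[OF True] xnth True al)
  next
    case False
    then show ?thesis using Phi_carrier[of x] z by (simp add: cyc_carrier_def)
  qed
  moreover have "x \<in> tga_carrier N" by (simp add: tga_carrier_def x_def)
  ultimately show ?thesis by blast
qed

lemma Phi_bij: "bij_betw Phi (tga_carrier N) (cyc_carrier N)"
  unfolding bij_betw_def inj_on_def using Phi_inj Phi_carrier Phi_surj by blast

lemma twisted_group_algebra_iso:
  "\<exists>(f :: nat \<times> nat \<Rightarrow> nat \<times> nat \<Rightarrow> 'a fls) (\<Phi> :: (nat \<times> nat \<Rightarrow> 'a fls) \<Rightarrow> (nat \<Rightarrow> 'b fls)).
      two_cocycle N m f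
    \<and> bij_betw \<Phi> (tga_carrier N) (cyc_carrier N)
    \<and> (\<forall>x\<in>tga_carrier N. \<forall>y\<in>tga_carrier N.
          \<Phi> (\<lambda>g. x g + y g) = (\<lambda>i. \<Phi> x i + \<Phi> y i)
        \<and> \<Phi> (tga_mult N m f x y) = cyc_mult N sig (\<Phi> x) (\<Phi> y))
    \<and> (\<forall>a. \<forall>x\<in>tga_carrier N. \<Phi> (\<lambda>g. a * x g) = cyc_smult iota a (\<Phi> x))
    \<and> \<Phi> (tga_basis G_pi) = cyc_elem_L u
    \<and> \<Phi> (tga_basis G_sigma) = cyc_v"
  by (intro exI[of _ cocycle] exI[of _ Phi] conjI ballI allI)
    (simp_all only: two_cocycle Phi_bij Phi_add Phi_mult Phi_smult Phi_pi Phi_sigma)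

text \<open>An element commuting with u lies in L((t)): its v^i-components satisfy
  z_i (sigma^i(u) - u) = 0, and sigma^i(u) /= u for 0 < i < N.\<close>
lemma commutes_with_u:
  assumes zc: "z \<in> cyc_carrier N" and comm: "D.cm z (cyc_elem_L u) = D.cm (cyc_elem_L u) z"
  shows "z = cyc_mono 0 (z 0)"
proof -
  have U: "cyc_elem_L u = cyc_mono 0 (fls_const u)" by (simp add: cyc_elem_L_def cyc_mono_def)
  have zU: "D.cm z (cyc_elem_L u) = (\<Sum>i<N. cyc_mono i (z i * fls_const ((sig ^^ i) u)))"
    unfolding U using N_pos
    by (subst D.decomp[OF zc]) (simp add: D.cm_sum_left D.cm_mono cmap_const[OF sigp_fh])
  have Uz: "D.cm (cyc_elem_L u) z = (\<Sum>i<N. cyc_mono i (fls_const u * z i))"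
    unfolding U using N_pos by (subst D.decomp[OF zc]) (simp add: D.cm_sum_right D.cm_mono)
  have "z i = 0" if "0 < i" "i < N" for i
  proof -
    have "D.cm z (cyc_elem_L u) i = D.cm (cyc_elem_L u) z i" using comm by simp
    then have "z i * fls_const ((sig ^^ i) u) = fls_const u * z i"
      unfolding zU Uz D.decomp_nth[OF that(2)] .
    then have "z i * fls_const ((sig ^^ i) u - u) = 0"
      by (simp add: fls_minus_const[symmetric] algebra_simps)
    moreover have "(sig ^^ i) u \<noteq> u" using sigp_u_inj[of i 0] that N_pos by auto
    ultimately show ?thesis by simp
  qed
  moreover have "z i = 0" if "N \<le> i" for i using zc that by (simp add: cyc_carrier_def)
  ultimately show ?thesis
    unfolding cyc_mono_def fun_eq_iff by (metis not_less not_gr0)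
qed

text \<open>An element F of L((t)) commuting with v is fixed by sigma, since v F = sigma(F) v.\<close>
lemma commutes_with_v:
  assumes "D.cm (cyc_mono 0 F) cyc_v = D.cm cyc_v (cyc_mono 0 F)"
  shows "fls_cmap sig F = F"
proof -
  have V: "cyc_v = cyc_mono 1 1" by (simp add: cyc_v_def cyc_mono_def fun_eq_iff)
  have idx: "(0 + 1) mod N = 1" "(0 + 1) div N = 0" "(1 + 0) mod N = 1" "(1 + 0) div N = 0"
    using N_gt1 s1 sn by auto
  have "D.cm (cyc_mono 0 F) cyc_v = cyc_mono 1 F"
    unfolding V D.cm_mono[OF N_pos N_gt1, of F 1] idx by simp
  moreover have "D.cm cyc_v (cyc_mono 0 F) = cyc_mono 1 (fls_cmap sig F)"
    unfolding V D.cm_mono[OF N_gt1 N_pos, of 1 F] idx by simp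
  ultimately have "cyc_mono 1 F 1 = cyc_mono 1 (fls_cmap sig F) 1" using assms by simp
  then show ?thesis by (simp add: cyc_mono_def)
qed

lemma fixed_series_in_K:
  assumes "fls_cmap sig F = F"
  shows "F \<in> range (fls_cmap iota)"
proof -
  have "sig (F $$ k) = F $$ k" for k
    using arg_cong[OF assms, of "\<lambda>G. G $$ k"] by (simp add: cmap_nth[OF sig_fh])
  then have al: "iota (SOME a. F $$ k = iota a) = F $$ k" for k
    using someI_ex[OF sig_fixed_in_K] by metis
  define A where "A = Abs_fls (\<lambda>k. SOME a. F $$ k = iota a)"
  have "fls_cmap iota A = F"
  proof (rule fls_eqI)
    fix k
    have "\<forall>j < fls_subdegree F. (SOME a. F $$ j = iota a) = 0" using al io_eq0 by simp
    then have "A $$ k = (SOME a. F $$ k = iota a)"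
      unfolding A_def by (rule nth_Abs_fls_lower_bound)
    then show "fls_cmap iota A $$ k = F $$ k" by (simp add: cmap_nth[OF fh] al)
  qed
  then show ?thesis by blast
qed

lemma central: "cyc_is_central iota N sig"
  unfolding cyc_is_central_def
proof (intro equalityI subsetI)
  fix z assume "z \<in> range (cyc_scalar iota)"
  then obtain a where z: "z = scl a cyc_one"
    by (auto simp: cyc_scalar_def cyc_smult_def cyc_one_def fun_eq_iff)
  have "z \<in> cyc_carrier N" using D.one_carrier by (auto simp: z cyc_carrier_def scl_apply)
  moreover have "D.cm z x = D.cm x z" if "x \<in> cyc_carrier N" for x
    unfolding z cm_scl_left cm_scl_right D.cm_one_left[OF that] D.cm_one_right[OF that] ..
  ultimately show "z \<in> {z \<in> cyc_carrier N. \<forall>x\<in>cyc_carrier N. D.cm z x = D.cm x z}" by blast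
next
  fix z assume "z \<in> {z \<in> cyc_carrier N. \<forall>x\<in>cyc_carrier N. D.cm z x = D.cm x z}"
  then have zc: "z \<in> cyc_carrier N" and comm: "\<And>x. x \<in> cyc_carrier N \<Longrightarrow> D.cm z x = D.cm x z"
    by auto
  have "cyc_elem_L u \<in> cyc_carrier N" "cyc_v \<in> cyc_carrier N"
    using N_gt1 s1 sn by (auto simp: cyc_carrier_def cyc_elem_L_def cyc_v_def)
  then have z0: "z = cyc_mono 0 (z 0)" using commutes_with_u[OF zc] comm by blast
  have "fls_cmap sig (z 0) = z 0"
    using commutes_with_v[of "z 0"] comm[OF \<open>cyc_v \<in> cyc_carrier N\<close>] z0 by simp
  then obtain A where "z 0 = fls_cmap iota A" using fixed_series_in_K by blast
  then have "z = cyc_scalar iota A" by (subst z0) (auto simp: cyc_scalar_def cyc_mono_def)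
  then show "z \<in> range (cyc_scalar iota)" by blast
qed

lemma carrier_span:
  "(cyc_carrier N :: (nat \<Rightarrow> 'b fls) set) = module.span scl (basis_elt ` G_carrier N)"
proof -
  interpret W: vector_space scl by (rule scl_vector_space)
  show ?thesis
  proof
    show "cyc_carrier N \<subseteq> W.span (basis_elt ` G_carrier N)"
    proof
      fix z :: "nat \<Rightarrow> 'b fls" assume "z \<in> cyc_carrier N"
      then obtain x where "z = Phi x" using Phi_surj by metis
      moreover have "scl (x g) (basis_elt g) \<in> W.span (basis_elt ` G_carrier N)"
        if "g \<in> G_carrier N" for g
        using that by (intro W.span_scale W.span_base) simp
      ultimately show "z \<in> W.span (basis_elt ` G_carrier N)"
        unfolding Phi_def by (simp add: W.span_sum)
    qed
    have "W.subspace (cyc_carrier N)"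
      unfolding W.subspace_def by (auto simp: cyc_carrier_def scl_apply)
    moreover have "basis_elt ` G_carrier N \<subseteq> cyc_carrier N" using basis_elt_carrier by auto
    ultimately show "W.span (basis_elt ` G_carrier N) \<subseteq> cyc_carrier N"
      by (rule W.span_minimal[rotated])
  qed
qed

text \<open>Left multiplication by x /= 0 is injective (no zero divisors) and k-linear on a finite
  dimensional space, hence onto; a right inverse of x is then also a left inverse.\<close>
lemma division: "cyc_is_division N sig"
  unfolding cyc_is_division_def
proof (intro ballI impI)
  fix x :: "nat \<Rightarrow> 'b fls" assume xc: "x \<in> cyc_carrier N" and "x \<noteq> (\<lambda>_. 0)"
  then have x0: "x \<noteq> 0" by (simp add: zero_fun_def)
  have inj: "inj_on (D.cm x) (cyc_carrier N)"
  proof (rule inj_onI)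
    fix y1 y2 assume y: "y1 \<in> cyc_carrier N" "y2 \<in> cyc_carrier N" "D.cm x y1 = D.cm x y2"
    have "y1 - y2 \<in> cyc_carrier N" using y(1,2) by (simp add: cyc_carrier_def)
    moreover have "D.cm x (y1 - y2) = 0" using y(3) by (simp add: D.cm_diff_right)
    ultimately have "y1 - y2 = 0" using D.cm_no_zero_divisors[OF xc _ x0] by blast
    then show "y1 = y2" by simp
  qed
  have "D.cm x ` cyc_carrier N = cyc_carrier N"
    unfolding carrier_span
  proof (rule inj_endo_span_surj[OF scl_vector_space])
    show "finite (basis_elt ` G_carrier N)" using finite_G by simp
    show "D.cm x ` module.span scl (basis_elt ` G_carrier N) \<subseteq> module.span scl (basis_elt ` G_carrier N)"
      using D.cm_carrier carrier_span by auto
    show "inj_on (D.cm x) (module.span scl (basis_elt ` G_carrier N))" using inj carrier_span by simp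
  qed (simp_all add: D.cm_add_right cm_scl_right)
  then obtain y where yc: "y \<in> cyc_carrier N" and xy: "D.cm x y = cyc_one"
    using D.one_carrier by (metis imageE)
  have "D.cm x (D.cm y x) = D.cm x cyc_one"
    using D.cm_assoc[OF xc yc xc] xy D.cm_one_left[OF xc] D.cm_one_right[OF xc] by simp
  then have "D.cm y x = cyc_one"
    using inj D.cm_carrier D.one_carrier by (meson inj_onD)
  then show "\<exists>y\<in>cyc_carrier N. D.cm x y = cyc_one \<and> D.cm y x = cyc_one" using yc xy by blast
qed

end

theorem mainTheorem5:
  fixes p s n :: nat
    and iota :: "'a::field_char_0 \<Rightarrow> 'b::field"
    and \<xi> c :: 'a
    and u :: 'b
  assumes "prime p"
    and "1 \<le> s" and "s \<le> n" and "p = 2 \<longrightarrow> s \<noteq> 1"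
    and "primitive_root_of_unity (p ^ s) \<xi>"
    and "\<not> (\<exists>z::'a. primitive_root_of_unity (p ^ (s + 1)) z)"
    and "c \<noteq> 0"
    and "field_hom iota"
    and "u ^ (p ^ n) = iota c ^ (p ^ (n - s)) * iota \<xi>"
    and "generated_field (range iota \<union> {u}) = UNIV"
    and "ext_degree_is iota (p ^ n)"
  shows "\<exists>\<sigma>. galois_aut iota \<sigma>
      \<and> card (galois_group iota) = p ^ n
      \<and> galois_group iota = {\<sigma> ^^ i | i. i < p ^ n}
      \<and> \<sigma> u = inverse (iota c) * u ^ (p ^ s + 1)
      \<and> cyc_is_central iota (p ^ n) \<sigma>
      \<and> cyc_is_division (p ^ n) \<sigma>
      \<and> (\<exists>(f :: nat \<times> nat \<Rightarrow> nat \<times> nat \<Rightarrow> 'a fls) (\<Phi> :: (nat \<times> nat \<Rightarrow> 'a fls) \<Rightarrow> (nat \<Rightarrow> 'b fls)).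
           two_cocycle (p ^ n) (p ^ s + 1) f
         \<and> bij_betw \<Phi> (tga_carrier (p ^ n)) (cyc_carrier (p ^ n))
         \<and> (\<forall>x\<in>tga_carrier (p ^ n). \<forall>y\<in>tga_carrier (p ^ n).
               \<Phi> (\<lambda>g. x g + y g) = (\<lambda>i. \<Phi> x i + \<Phi> y i)
             \<and> \<Phi> (tga_mult (p ^ n) (p ^ s + 1) f x y) = cyc_mult (p ^ n) \<sigma> (\<Phi> x) (\<Phi> y))
         \<and> (\<forall>a. \<forall>x\<in>tga_carrier (p ^ n). \<Phi> (\<lambda>g. a * x g) = cyc_smult iota a (\<Phi> x))
         \<and> \<Phi> (tga_basis G_pi) = cyc_elem_L u
         \<and> \<Phi> (tga_basis G_sigma) = cyc_v)"
proof -
  interpret kummer_extension p s n iota \<xi> c u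
    using assms by unfold_locales auto
  show ?thesis
    using sig_aut card_galois galois_group_eq sig_u_formula central division
      twisted_group_algebra_iso by blast
qed

end
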